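(* In the restricted cut-and-choose setting described in the context (Protocol 1), assume the expected number of test rounds satisfies $N\ge1$. Let $\varepsilon_H,\varepsilon_D\ge0$ be such that, for the input $\psi=|+\rangle\langle+|^{\otimes k}$ and unitary $U=\mathbb{1}_{\mathcal{X}}$, $$\tfrac12\big\|\rho_H-|+\rangle\langle+|^{\otimes k}\big\|_1\le\varepsilon_H$$ and, for every $\alpha\in\mathbb{R}$ (attack placement fixed as before or after the delegated unitary), $$\min_{p\in[0,1]}\tfrac12\big\|\rho^\alpha_D-\big(p|+\rangle\langle+|^{\otimes k}+(1-p)|\bot\rangle\langle\bot|\big)\big\|_1\le\varepsilon_D .$$ Then $\varepsilon_H+\varepsilon_D\ge\frac{1}{4\sqrt N}$.
   Context: Restricted cut-and-choose setting. Fix $k\ge 1$, $\mathcal{X}=\mathbb{C}^{2^k}$, $P(\alpha)=\mathrm{diag}(1,e^{i\alpha})$, $A_\alpha=\mathbb{1}_2^{\otimes(k-1)}\otimes P(\alpha)$, $|+\rangle=(|0\rangle+|1\rangle)/\sqrt2$, $|+_\alpha\rangle=(|0\rangle+e^{i\alpha}|1\rangle)/\sqrt2$. Let $\Omega$ be a probability distribution on $\mathbb{N}=\{0,1,\dots\}$ (number $n$ of test rounds) with finite mean $N=\sum_n n\Omega(n)$. For each $n$ and $i\in\{1,\dots,n+1\}$ there are a test unitary $T_{n,i}\in\mathrm{U}(\mathcal{X})$ and a test input unit vector $|\chi_{n,i}\rangle\in\mathcal{X}$, and for each $n$ an operator $0\le\mu_{k,n}\le\mathbb{1}$ on $\mathcal{X}^{\otimes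 n}$ (accept outcome). The output round $\ell$ is uniform on $\{1,\dots,n+1\}$, rounds $i\neq\ell$ are test rounds; after all rounds the client measures the $n$ test outputs with $\{\mu_{k,n},\mathbb{1}-\mu_{k,n}\}$, outputs the computation-round output on acceptance and $|\bot\rangle$ otherwise, where $|\bot\rangle$ is a unit vector orthogonal to $\mathcal{X}$. The phase attack with parameter $\alpha$ replaces every delegated unitary $T$ by $T^\alpha=TA_\alpha$ (for all rounds) or by $T^\alpha=A_\alpha T$ (for all rounds). Define $p^H_{n,\ell}=\mathrm{Tr}[\mu_{k,n}\bigotimes_{i\ne\ell}T_{n,i}|\chi_{n,i}\rangle\langle\chi_{n,i}|T_{n,i}^\dagger]$, $p^D_{n,\ell}$ the same with $T_{n,i}$ replaced by $T^\alpha_{n,i}$, $p_H=\sum_n\frac{\Omega(n)}{n+1}\sum_{\ell=1}^{n+1}p^H_{n,\ell}$, $p^\alpha_D=\sum_n\frac{\Omega(n)}{n+1}\sum_{\ell=1}^{n+1}p^D_{n,\ell}$. The client's output states are $\rho_H=p_H|+\rangle\langle+|^{\otimes k}+(1-p_H)|\bot\rangle\langle\bot|$ (honest) and $\rho^\alpha_D=p^\alpha_D|+\rangle\langle+|^{\otimes (k-1)}\otimes|+_\alpha\rangle\langle+_\alpha|+(1-p^\alpha_D)|\bot\rangle\langle\bot|$ (phase attack). These trace-distance conditions are implied by composable $\varepsilon_H$-correctness and $\varepsilon_D$-security with respect to the ideal VDQC resource, which outputs $U(\psi)$ if the server's bit $c=0$ and $\bot$ if $c=1$. *)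

theory Defs
  imports "Jordan_Normal_Form.Schur_Decomposition"
    "Jordan_Normal_Form.Char_Poly"
begin

definition cinner :: "complex vec \<Rightarrow> complex vec \<Rightarrow> complex" where
  "cinner u v = (\<Sum>i<dim_vec v. cnj (u $ i) * v $ i)"

definition unit_vector :: "nat \<Rightarrow> complex vec \<Rightarrow> bool" where
  "unit_vector n v \<longleftrightarrow> v \<in> carrier_vec n \<and> cinner v v = 1"

definition unitary_mat :: "nat \<Rightarrow> complex mat \<Rightarrow> bool" where
  "unitary_mat n U \<longleftrightarrow> U \<in> carrier_mat n n \<and> mat_adjoint U * U = 1\<^sub>m n"

definition psd :: "nat \<Rightarrow> complex mat \<Rightarrow> bool" where
  "psd n M \<longleftrightarrow> M \<in> carrier_mat n n \<and> mat_adjoint M = M \<and>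
     (\<forall>v \<in> carrier_vec n. cinner v (M *\<^sub>v v) \<in> \<real> \<and> 0 \<le> Re (cinner v (M *\<^sub>v v)))"

definition effect :: "nat \<Rightarrow> complex mat \<Rightarrow> bool" where
  "effect n M \<longleftrightarrow> psd n M \<and> psd n (1\<^sub>m n - M)"

definition mtrace :: "complex mat \<Rightarrow> complex" where
  "mtrace A = (\<Sum>i<dim_row A. A $$ (i, i))"

definition proj :: "complex vec \<Rightarrow> complex mat" where
  "proj v = mat (dim_vec v) (dim_vec v) (\<lambda>(i, j). v $ i * cnj (v $ j))"

text \<open>Trace norm = sum of singular values = sum of square roots of the eigenvalues
  (with multiplicity) of A^dagger A.\<close>
definition trace_norm :: "complex mat \<Rightarrow> real" where
  "trace_norm A = (\<Sum>x \<in># proots (char_poly (mat_adjoint A * A)). sqrt (Re x))"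

definition trace_dist :: "complex mat \<Rightarrow> complex mat \<Rightarrow> real" where
  "trace_dist A B = trace_norm (A - B) / 2"

definition kron_vec :: "complex vec \<Rightarrow> complex vec \<Rightarrow> complex vec" where
  "kron_vec u v = vec (dim_vec u * dim_vec v) (\<lambda>i. u $ (i div dim_vec v) * v $ (i mod dim_vec v))"

definition kron_mat :: "complex mat \<Rightarrow> complex mat \<Rightarrow> complex mat" where
  "kron_mat A B = mat (dim_row A * dim_row B) (dim_col A * dim_col B)
     (\<lambda>(i, j). A $$ (i div dim_row B, j div dim_col B) * B $$ (i mod dim_row B, j mod dim_col B))"

fun kron_vec_pow :: "complex vec \<Rightarrow> nat \<Rightarrow> complex vec" where
  "kron_vec_pow v 0 = vec 1 (\<lambda>_. 1)"
| "kron_vec_pow v (Suc n) = kron_vec (kron_vec_pow v n) v"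

fun kron_mat_pow :: "complex mat \<Rightarrow> nat \<Rightarrow> complex mat" where
  "kron_mat_pow A 0 = 1\<^sub>m 1"
| "kron_mat_pow A (Suc n) = kron_mat (kron_mat_pow A n) A"

fun kron_mats :: "complex mat list \<Rightarrow> complex mat" where
  "kron_mats [] = 1\<^sub>m 1"
| "kron_mats (A # As) = kron_mat A (kron_mats As)"

definition ket_plus :: "complex vec" where
  "ket_plus = vec_of_list [1 / sqrt 2, 1 / sqrt 2]"

definition ket_plus_alpha :: "real \<Rightarrow> complex vec" where
  "ket_plus_alpha a = vec_of_list [1 / sqrt 2, exp (\<i> * a) / sqrt 2]"

definition phase_gate :: "real \<Rightarrow> complex mat" where
  "phase_gate a = mat_of_rows_list 2 [[1, 0], [0, exp (\<i> * a)]]"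

definition A_alpha :: "nat \<Rightarrow> real \<Rightarrow> complex mat" where
  "A_alpha k a = kron_mat (kron_mat_pow (1\<^sub>m 2) (k - 1)) (phase_gate a)"

text \<open>The output space is X (+) span{|bot>}, modelled as C^(2^k + 1) where the last
  basis vector (index 2^k) is |bot>.\<close>
definition embed :: "complex vec \<Rightarrow> complex vec" where
  "embed v = vec (dim_vec v + 1) (\<lambda>i. if i < dim_vec v then v $ i else 0)"

definition ket_bot :: "nat \<Rightarrow> complex vec" where
  "ket_bot k = unit_vec (2 ^ k + 1) (2 ^ k)"

definition plus_k :: "nat \<Rightarrow> complex vec" where
  "plus_k k = embed (kron_vec_pow ket_plus k)"

definition plus_k_alpha :: "nat \<Rightarrow> real \<Rightarrow> complex vec" where
  "plus_k_alpha k a = embed (kron_vec (kron_vec_pow ket_plus (k - 1)) (ket_plus_alpha a))"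

text \<open>Acceptance probability of the tests when the rounds use unitaries T n i
  (output round l excluded), i.e. Tr[mu_{k,n} (tensor_{i /= l} T|chi><chi|T^dagger)].\<close>
definition accept_prob ::
  "(nat \<Rightarrow> complex mat) \<Rightarrow> (nat \<Rightarrow> nat \<Rightarrow> complex mat) \<Rightarrow> (nat \<Rightarrow> nat \<Rightarrow> complex vec)
     \<Rightarrow> nat \<Rightarrow> nat \<Rightarrow> complex" where
  "accept_prob \<mu> T chi n l = mtrace (\<mu> n * kron_mats
      (map (\<lambda>i. T n i * proj (chi n i) * mat_adjoint (T n i)) (filter (\<lambda>i. i \<noteq> l) [1..<n + 2])))"

definition avg_accept ::
  "(nat \<Rightarrow> real) \<Rightarrow> (nat \<Rightarrow> complex mat) \<Rightarrow> (nat \<Rightarrow> nat \<Rightarrow> complex mat) \<Rightarrow> (nat \<Rightarrow> nat \<Rightarrow> complex vec)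
     \<Rightarrow> complex" where
  "avg_accept \<Omega> \<mu> T chi =
     (\<Sum>n. complex_of_real (\<Omega> n / real (n + 1)) * (\<Sum>l = 1..n + 1. accept_prob \<mu> T chi n l))"

definition attacked :: "nat \<Rightarrow> bool \<Rightarrow> real \<Rightarrow> complex mat \<Rightarrow> complex mat" where
  "attacked k attack_after a U = (if attack_after then A_alpha k a * U else U * A_alpha k a)"

definition rho_H ::
  "nat \<Rightarrow> (nat \<Rightarrow> real) \<Rightarrow> (nat \<Rightarrow> complex mat) \<Rightarrow> (nat \<Rightarrow> nat \<Rightarrow> complex mat) \<Rightarrow> (nat \<Rightarrow> nat \<Rightarrow> complex vec)
     \<Rightarrow> complex mat" where
  "rho_H k \<Omega> \<mu> T chi = (let p = avg_accept \<Omega> \<mu> T chi in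
      p \<cdot>\<^sub>m proj (plus_k k) + (1 - p) \<cdot>\<^sub>m proj (ket_bot k))"

definition rho_D ::
  "nat \<Rightarrow> bool \<Rightarrow> real \<Rightarrow> (nat \<Rightarrow> real) \<Rightarrow> (nat \<Rightarrow> complex mat) \<Rightarrow> (nat \<Rightarrow> nat \<Rightarrow> complex mat)
     \<Rightarrow> (nat \<Rightarrow> nat \<Rightarrow> complex vec) \<Rightarrow> complex mat" where
  "rho_D k attack_after a \<Omega> \<mu> T chi =
     (let p = avg_accept \<Omega> \<mu> (\<lambda>n i. attacked k attack_after a (T n i)) chi in
      p \<cdot>\<^sub>m proj (plus_k_alpha k a) + (1 - p) \<cdot>\<^sub>m proj (ket_bot k))"

end

(* The phase attack with angle 2 beta multiplies the odd computational-basis amplitudes of every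
   delegated output by a phase, so each test output keeps overlap at least cos beta with its honest
   counterpart, and the n test outputs of a run keep overlap at least cos beta ^ n.  For two unit
   vectors with overlap c, the acceptance probabilities of any effect differ by at most
   sqrt (1 - c ^ 2); by Bernoulli's inequality this is at most sqrt n * sin beta here, and averaging
   over the number of test rounds with E sqrt n <= sqrt N gives p_H - p_D <= sin beta * sqrt N.
   Correctness forces eps_H >= 1 - p_H.  The Helstrom measurement separating |+> from |+_(2 beta)>
   shows that the attacked output is at trace distance at least p_D * sin beta from every ideal
   output p |+><+| + (1 - p) |bot><bot|, so eps_D >= p_D * sin beta.  Choosing
   sin beta = 1 / (2 sqrt N) and combining the three inequalities yields the bound. *)

theory Submission
  imports Defs
begin

section \<open>Adjoints, inner products and unitary matrices\<close>

lemma mat_adjoint_dim [simp]: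
  "dim_row (mat_adjoint A) = dim_col A" "dim_col (mat_adjoint A) = dim_row A"
  unfolding mat_adjoint_def by (auto simp: mat_of_rows_def)

lemma mat_adjoint_carrier [simp]: "A \<in> carrier_mat n m \<Longrightarrow> mat_adjoint A \<in> carrier_mat m n"
  by (intro carrier_matI) auto

lemma index_mat_adjoint [simp]:
  "i < dim_col A \<Longrightarrow> j < dim_row A \<Longrightarrow> mat_adjoint A $$ (i, j) = cnj (A $$ (j, i))"
  unfolding mat_adjoint_def mat_of_rows_def by (subst index_mat) auto

lemma mat_adjoint_mat_adjoint [simp]: "mat_adjoint (mat_adjoint (A :: complex mat)) = A"
  by (rule eq_matI) auto

lemma mat_adjoint_mult:
  assumes "A \<in> carrier_mat n m" "B \<in> carrier_mat m p"
  shows "mat_adjoint (A * (B :: complex mat)) = mat_adjoint B * mat_adjoint A"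
  using assms
  by (intro eq_matI) (auto simp: scalar_prod_def sum_distrib_left mult.commute intro!: sum.cong)

lemma mat_adjoint_add:
  "A \<in> carrier_mat n m \<Longrightarrow> B \<in> carrier_mat n m \<Longrightarrow>
    mat_adjoint (A + (B :: complex mat)) = mat_adjoint A + mat_adjoint B"
  by (rule eq_matI) auto

lemma mat_adjoint_smult: "mat_adjoint (c \<cdot>\<^sub>m (A :: complex mat)) = cnj c \<cdot>\<^sub>m mat_adjoint A"
  by (rule eq_matI) auto

lemma cinner_eq_sum: "v \<in> carrier_vec n \<Longrightarrow> cinner u v = (\<Sum>i<n. cnj (u $ i) * v $ i)"
  unfolding cinner_def by auto

lemma cinner_add_right:
  "v \<in> carrier_vec n \<Longrightarrow> w \<in> carrier_vec n \<Longrightarrow> cinner u (v + w) = cinner u v + cinner u w"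
  by (simp add: cinner_eq_sum[of _ n] distrib_left sum.distrib)

lemma cinner_minus_right:
  "v \<in> carrier_vec n \<Longrightarrow> w \<in> carrier_vec n \<Longrightarrow> cinner u (v - w) = cinner u v - cinner u w"
  by (simp add: cinner_eq_sum[of _ n] right_diff_distrib sum_subtractf)

lemma cinner_smult_right: "cinner u (c \<cdot>\<^sub>v v) = c * cinner u v"
  by (simp add: cinner_def sum_distrib_left ac_simps)

lemma cinner_add_left:
  "u \<in> carrier_vec n \<Longrightarrow> w \<in> carrier_vec n \<Longrightarrow> v \<in> carrier_vec n \<Longrightarrow>
    cinner (u + w) v = cinner u v + cinner w v"
  by (simp add: cinner_eq_sum[of _ n] distrib_right sum.distrib)

lemma cinner_minus_left:
  "u \<in> carrier_vec n \<Longrightarrow> w \<in> carrier_vec n \<Longrightarrow> v \<in> carrier_vec n \<Longrightarrow>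
    cinner (u - w) v = cinner u v - cinner w v"
  by (simp add: cinner_eq_sum[of _ n] left_diff_distrib sum_subtractf)

lemma cinner_smult_left:
  "u \<in> carrier_vec n \<Longrightarrow> v \<in> carrier_vec n \<Longrightarrow> cinner (c \<cdot>\<^sub>v u) v = cnj c * cinner u v"
  by (simp add: cinner_eq_sum[of _ n] sum_distrib_left ac_simps)

lemma cinner_commute: "u \<in> carrier_vec n \<Longrightarrow> v \<in> carrier_vec n \<Longrightarrow> cinner v u = cnj (cinner u v)"
  by (simp add: cinner_eq_sum[of _ n] ac_simps)

lemma cnj_mult_self: "cnj z * z = (complex_of_real (cmod z))\<^sup>2"
  using complex_norm_square[of z] by (simp add: mult.commute)

lemma mult_cnj_self: "z * cnj z = (complex_of_real (cmod z))\<^sup>2"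
  using complex_norm_square[of z] by simp

lemma cinner_self: "cinner v v = complex_of_real (\<Sum>i<dim_vec v. (cmod (v $ i))\<^sup>2)"
  unfolding cinner_def of_real_sum by (rule sum.cong) (auto simp: cnj_mult_self)

lemma cinner_self_nonneg: "0 \<le> Re (cinner v v)" and Im_cinner_self [simp]: "Im (cinner v v) = 0"
  unfolding cinner_self by (auto intro: sum_nonneg)

lemma cinner_self_eq_Re: "cinner v v = complex_of_real (Re (cinner v v))"
  by (simp add: complex_eq_iff)

lemma cinner_self_eq_0: "v \<in> carrier_vec n \<Longrightarrow> cinner v v = 0 \<Longrightarrow> v = 0\<^sub>v n"
proof -
  assume v: "v \<in> carrier_vec n" and "cinner v v = 0"
  hence "complex_of_real (\<Sum>i<n. (cmod (v $ i))\<^sup>2) = 0" using cinner_self[of v] v by simp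
  hence "(\<Sum>i<n. (cmod (v $ i))\<^sup>2) = 0" by (simp only: of_real_eq_0_iff)
  hence "\<forall>i\<in>{..<n}. (cmod (v $ i))\<^sup>2 = 0" by (subst sum_nonneg_eq_0_iff[symmetric]) auto
  thus ?thesis using v by (auto intro!: eq_vecI)
qed

lemma cinner_mult_mat_vec:
  assumes "M \<in> carrier_mat n m" "u \<in> carrier_vec n" "v \<in> carrier_vec m"
  shows "cinner u (M *\<^sub>v v) = cinner (mat_adjoint M *\<^sub>v u) v"
  using assms
  by (simp add: cinner_eq_sum[of _ n] cinner_eq_sum[of _ m] scalar_prod_def sum_distrib_left
      sum_distrib_right ac_simps sum.swap[of _ "{..<n}"] atLeast0LessThan)

lemma cinner_hermitian_commute:
  assumes "M \<in> carrier_mat n n" "mat_adjoint M = M" "x \<in> carrier_vec n" "y \<in> carrier_vec n"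
  shows "cinner y (M *\<^sub>v x) = cnj (cinner x (M *\<^sub>v y))"
  using assms cinner_mult_mat_vec[of M n n y x] cinner_commute[of x n "M *\<^sub>v y"] by simp

lemma cscalar_prod_eq_cinner: "dim_vec u = dim_vec w \<Longrightarrow> w \<bullet>c u = cinner u w"
  unfolding cinner_def scalar_prod_def
  by (auto simp: conjugate_complex_def mult.commute atLeast0LessThan intro!: sum.cong)

lemma mult_carrier_mat_square: "A \<in> carrier_mat n n \<Longrightarrow> B \<in> carrier_mat n n \<Longrightarrow> A * B \<in> carrier_mat n n"
  by auto

lemma unitary_matD: "unitary_mat n U \<Longrightarrow> U \<in> carrier_mat n n"
  "unitary_mat n U \<Longrightarrow> mat_adjoint U * U = 1\<^sub>m n"
  unfolding unitary_mat_def by auto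

lemma unitary_mult_adjoint: "unitary_mat n U \<Longrightarrow> U * mat_adjoint U = 1\<^sub>m n"
  by (meson mat_adjoint_carrier mat_mult_left_right_inverse unitary_matD)

lemma unitary_adjoint_mult_cancel:
  "unitary_mat n U \<Longrightarrow> X \<in> carrier_mat n m \<Longrightarrow> mat_adjoint U * (U * X) = X"
  using assoc_mult_mat[of "mat_adjoint U" n n U n X m] unitary_matD[of n U] by simp

lemma unitary_cinner:
  assumes U: "unitary_mat n U" and u: "u \<in> carrier_vec n" and v: "v \<in> carrier_vec n"
  shows "cinner (U *\<^sub>v u) (U *\<^sub>v v) = cinner u v"
proof -
  note U' = unitary_matD[OF U]
  have "cinner (U *\<^sub>v u) (U *\<^sub>v v) = cinner (mat_adjoint U *\<^sub>v (U *\<^sub>v u)) v"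
    using cinner_mult_mat_vec[of U n n "U *\<^sub>v u" v] U' u v by auto
  also have "mat_adjoint U *\<^sub>v (U *\<^sub>v u) = (mat_adjoint U * U) *\<^sub>v u"
    using U' u by (simp add: assoc_mult_mat_vec[symmetric, of _ n n _ n])
  also have "\<dots> = u" using U' u by simp
  finally show ?thesis .
qed

lemma unitary_mult: "unitary_mat n U \<Longrightarrow> unitary_mat n V \<Longrightarrow> unitary_mat n (U * V)"
  unfolding unitary_mat_def
  by (auto simp: mat_adjoint_mult[of _ n n] assoc_mult_mat[of _ n n _ n _ n]
      simp flip: assoc_mult_mat[of "mat_adjoint U" n n])

lemma unitary_cinner_col: "unitary_mat n U \<Longrightarrow> k < n \<Longrightarrow> cinner (col U k) (col U k) = 1"
  using unitary_matD[of n U]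
  by (auto simp: cinner_eq_sum[of _ n] scalar_prod_def atLeast0LessThan
      dest!: arg_cong[where f = "\<lambda>M. M $$ (k, k)"])

section \<open>The spectral theorem for Hermitian matrices\<close>

lemma unitary_mat_of_cols:
  assumes len: "length ws = n" and ws: "set ws \<subseteq> carrier_vec n"
    and orthonormal: "\<And>i j. i < n \<Longrightarrow> j < n \<Longrightarrow> cinner (ws ! i) (ws ! j) = of_bool (i = j)"
  shows "unitary_mat n (mat_of_cols n ws)"
  unfolding unitary_mat_def
proof (intro conjI eq_matI)
  fix i j assume "i < dim_row (1\<^sub>m n)" "j < dim_col (1\<^sub>m n)"
  hence i: "i < n" and j: "j < n" by auto
  have wj: "ws ! j \<in> carrier_vec n" using j len ws by auto
  have "(mat_adjoint (mat_of_cols n ws) * mat_of_cols n ws) $$ (i, j) =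
      (\<Sum>k<n. cnj (ws ! i $ k) * ws ! j $ k)"
    using i j len ws by (auto simp: scalar_prod_def mat_of_cols_index atLeast0LessThan)
  also have "\<dots> = cinner (ws ! i) (ws ! j)" by (rule cinner_eq_sum[OF wj, symmetric])
  finally have "(mat_adjoint (mat_of_cols n ws) * mat_of_cols n ws) $$ (i, j) =
      cinner (ws ! i) (ws ! j)" .
  thus "(mat_adjoint (mat_of_cols n ws) * mat_of_cols n ws) $$ (i, j) = 1\<^sub>m n $$ (i, j)"
    using orthonormal[OF i j] i j by simp
qed (use len in auto)

lemma unitary_completion:
  assumes v: "v \<in> carrier_vec n" and v1: "cinner v v = 1"
  obtains W where "unitary_mat n W" "col W 0 = v"
proof -
  have v0: "v \<noteq> 0\<^sub>v n" using v1 by (auto simp: cinner_def)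
  have n0: "n > 0" using v v1 by (cases "n = 0") (auto simp: cinner_def)
  interpret cof_vec_space n "TYPE(complex)" .
  define b where "b = basis_completion v"
  from basis_completion[OF v v0, folded b_def]
  have dist_b: "distinct b" and indep: "\<not> lin_dep (set b)" and bc: "set b \<subseteq> carrier_vec n"
    and hdb: "hd b = v" and len_b: "length b = n" by auto
  define ws where "ws = gram_schmidt n b"
  from gram_schmidt_result[OF bc dist_b indep ws_def]
  have ws: "set ws \<subseteq> carrier_vec n" "corthogonal ws" "length ws = n" by (auto simp: len_b)
  from hdb len_b n0 obtain vs where "b = v # vs" by (cases b) auto
  hence "hd ws = v" unfolding ws_def using gram_schmidt_hd[OF v] by simp
  hence ws0: "ws ! 0 = v" using n0 ws(3) by (cases ws) auto
  have wsc: "i < n \<Longrightarrow> ws ! i \<in> carrier_vec n" for i using ws by auto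
  have orth: "i < n \<Longrightarrow> j < n \<Longrightarrow> cinner (ws ! i) (ws ! j) = 0 \<longleftrightarrow> i \<noteq> j" for i j
    using corthogonalD[OF ws(2), of j i] ws(3) cscalar_prod_eq_cinner[of "ws ! i" "ws ! j"]
      wsc[of i] wsc[of j] by auto
  define r where "r i = Re (cinner (ws ! i) (ws ! i))" for i
  have r: "cinner (ws ! i) (ws ! i) = complex_of_real (r i)" for i
    unfolding r_def by (rule cinner_self_eq_Re)
  have r_pos: "i < n \<Longrightarrow> r i > 0" for i
    using orth[of i i] r[of i] cinner_self_nonneg[of "ws ! i"] by (fastforce simp: r_def)
  define c where "c i = complex_of_real (1 / sqrt (r i))" for i
  define nws where "nws = map (\<lambda>i. c i \<cdot>\<^sub>v ws ! i) [0..<n]"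
  have "unitary_mat n (mat_of_cols n nws)"
  proof (rule unitary_mat_of_cols)
    fix i j assume i: "i < n" and j: "j < n"
    have "cinner (nws ! i) (nws ! j) = cnj (c i) * c j * cinner (ws ! i) (ws ! j)"
      using i j wsc by (simp add: nws_def cinner_smult_left[of _ n] cinner_smult_right)
    also have "\<dots> = of_bool (i = j)"
      using orth[OF i j] r_pos[OF i] by (auto simp: c_def r field_simps simp flip: of_real_mult)
    finally show "cinner (nws ! i) (nws ! j) = of_bool (i = j)" .
  qed (use wsc in \<open>auto simp: nws_def\<close>)
  moreover have "col (mat_of_cols n nws) 0 = v"
    using n0 ws0 v v1 by (simp add: nws_def c_def r_def)
  ultimately show ?thesis by (rule that)
qed

lemma unit_eigenvector_exists:
  assumes A: "A \<in> carrier_mat (Suc m) (Suc m)"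
  obtains v e where "v \<in> carrier_vec (Suc m)" "cinner v v = 1" "A *\<^sub>v v = e \<cdot>\<^sub>v v"
proof -
  obtain as where cp: "char_poly A = (\<Prod>a\<leftarrow>as. [:- a, 1:])" and "length as = Suc m"
    using char_poly_factorized[OF A] by auto
  then obtain e as' where "as = e # as'" by (cases as) auto
  hence "poly (char_poly A) e = 0" unfolding cp by simp
  then obtain u where "eigenvector A u e"
    using eigenvalue_root_char_poly[OF A] unfolding eigenvalue_def by auto
  hence u: "u \<in> carrier_vec (Suc m)" and u0: "u \<noteq> 0\<^sub>v (Suc m)" and Au: "A *\<^sub>v u = e \<cdot>\<^sub>v u"
    using A unfolding eigenvector_def by auto
  define r where "r = Re (cinner u u)"
  have r_pos: "r > 0"
    using cinner_self_eq_0[OF u] u0 cinner_self_nonneg[of u] cinner_self_eq_Re[of u]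
    by (fastforce simp: r_def)
  define v where "v = complex_of_real (1 / sqrt r) \<cdot>\<^sub>v u"
  show ?thesis
  proof (rule that)
    show "v \<in> carrier_vec (Suc m)" using u by (simp add: v_def)
    show "cinner v v = 1"
      using u r_pos cinner_self_eq_Re[of u]
      by (simp add: v_def cinner_smult_left[of _ "Suc m"] cinner_smult_right r_def[symmetric]
          flip: of_real_mult)
    show "A *\<^sub>v v = e \<cdot>\<^sub>v v"
      using A u Au by (simp add: v_def mult_mat_vec smult_smult_assoc mult.commute)
  qed
qed

definition corner_block :: "complex \<Rightarrow> complex mat \<Rightarrow> complex mat" where
  "corner_block c B = mat (Suc (dim_row B)) (Suc (dim_col B)) (\<lambda>(i, j).
     if i = 0 \<and> j = 0 then c else if i = 0 \<or> j = 0 then 0 else B $$ (i - 1, j - 1))"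

lemma corner_block_carrier [simp]:
  "B \<in> carrier_mat n m \<Longrightarrow> corner_block c B \<in> carrier_mat (Suc n) (Suc m)"
  unfolding corner_block_def by auto

lemma corner_block_mult:
  assumes A: "A \<in> carrier_mat n m" and B: "B \<in> carrier_mat m p"
  shows "corner_block a A * corner_block b B = corner_block (a * b) (A * B)"
proof (rule eq_matI)
  fix i j assume "i < dim_row (corner_block (a * b) (A * B))" "j < dim_col (corner_block (a * b) (A * B))"
  hence i: "i < Suc n" and j: "j < Suc p" using A B by (auto simp: corner_block_def)
  have "(corner_block a A * corner_block b B) $$ (i, j) =
      (\<Sum>k<Suc m. corner_block a A $$ (i, k) * corner_block b B $$ (k, j))"
    using A B i j by (simp add: corner_block_def scalar_prod_def atLeast0LessThan)
  also have "\<dots> = corner_block a A $$ (i, 0) * corner_block b B $$ (0, j) +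
      (\<Sum>k<m. corner_block a A $$ (i, Suc k) * corner_block b B $$ (Suc k, j))"
    by (subst sum.lessThan_Suc_shift) simp
  also have "\<dots> = corner_block (a * b) (A * B) $$ (i, j)"
    using A B i j by (cases i; cases j) (auto simp: corner_block_def scalar_prod_def atLeast0LessThan)
  finally show "(corner_block a A * corner_block b B) $$ (i, j) = corner_block (a * b) (A * B) $$ (i, j)" .
qed (use A B in \<open>auto simp: corner_block_def\<close>)

lemma mat_adjoint_corner_block: "mat_adjoint (corner_block c B) = corner_block (cnj c) (mat_adjoint B)"
  by (rule eq_matI) (auto simp: corner_block_def)

lemma corner_block_one: "corner_block 1 (1\<^sub>m n) = 1\<^sub>m (Suc n)"
  by (rule eq_matI) (auto simp: corner_block_def)

lemma corner_block_mat_diag: "corner_block (d 0) (mat_diag n (\<lambda>i. d (Suc i))) = mat_diag (Suc n) d"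
  by (rule eq_matI) (auto simp: corner_block_def mat_diag_def)

lemma unitary_corner_block: "unitary_mat n U \<Longrightarrow> unitary_mat (Suc n) (corner_block 1 U)"
  by (auto simp: unitary_mat_def mat_adjoint_corner_block corner_block_mult[of _ n n _ n]
      corner_block_one)

lemma hermitian_first_col_eigen:
  assumes C: "C \<in> carrier_mat (Suc m) (Suc m)" and herm: "mat_adjoint C = C"
    and col0: "col C 0 = e \<cdot>\<^sub>v unit_vec (Suc m) 0"
  defines "B \<equiv> mat m m (\<lambda>(i, j). C $$ (Suc i, Suc j))"
  shows "Im e = 0" "mat_adjoint B = B" "C = corner_block e B"
proof -
  have Ci0: "i < Suc m \<Longrightarrow> C $$ (i, 0) = (if i = 0 then e else 0)" for i
    using arg_cong[OF col0, of "\<lambda>x. x $ i"] C by (auto simp: unit_vec_def)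
  have Cji: "i < Suc m \<Longrightarrow> j < Suc m \<Longrightarrow> C $$ (i, j) = cnj (C $$ (j, i))" for i j
    using arg_cong[OF herm, of "\<lambda>X. X $$ (i, j)"] C by simp
  show e_real: "Im e = 0" using Cji[of 0 0] Ci0[of 0] by (simp add: complex_eq_iff)
  have C0j: "j < Suc m \<Longrightarrow> C $$ (0, j) = (if j = 0 then e else 0)" for j
    using Cji[of 0 j] Ci0[of j] e_real by (auto simp: complex_eq_iff)
  show "mat_adjoint B = B"
  proof (rule eq_matI)
    fix i j assume "i < dim_row B" "j < dim_col B"
    thus "mat_adjoint B $$ (i, j) = B $$ (i, j)" using Cji[of "Suc i" "Suc j"] by (simp add: B_def)
  qed (simp_all add: B_def)
  show "C = corner_block e B"
  proof (rule eq_matI)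
    fix i j assume "i < dim_row (corner_block e B)" "j < dim_col (corner_block e B)"
    hence "i < Suc m" "j < Suc m" by (simp_all add: corner_block_def B_def)
    thus "C $$ (i, j) = corner_block e B $$ (i, j)"
      using Ci0[of i] C0j[of j] by (cases i; cases j) (simp_all add: corner_block_def B_def)
  qed (use C in \<open>simp_all add: corner_block_def B_def\<close>)
qed

lemma hermitian_deflation:
  assumes A: "A \<in> carrier_mat (Suc m) (Suc m)" and herm: "mat_adjoint A = A"
  obtains W e B where "unitary_mat (Suc m) W" "Im e = 0" "B \<in> carrier_mat m m"
    "mat_adjoint B = B" "A = W * corner_block e B * mat_adjoint W"
proof -
  obtain v e where v: "v \<in> carrier_vec (Suc m)" and v1: "cinner v v = 1" and Av: "A *\<^sub>v v = e \<cdot>\<^sub>v v"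
    using unit_eigenvector_exists[OF A] .
  obtain W where Wu: "unitary_mat (Suc m) W" and Wv: "col W 0 = v"
    using unitary_completion[OF v v1] .
  note W = unitary_matD[OF Wu] and WW' = unitary_mult_adjoint[OF Wu]
  define C where "C = mat_adjoint W * A * W"
  have C: "C \<in> carrier_mat (Suc m) (Suc m)" using W A unfolding C_def by auto
  have C_herm: "mat_adjoint C = C"
    using W A herm
    by (simp add: C_def mat_adjoint_mult[of _ "Suc m" "Suc m" _ "Suc m"] mult_carrier_mat_square
        assoc_mult_mat[of _ "Suc m" "Suc m" _ "Suc m" _ "Suc m"])
  have "col C 0 = (mat_adjoint W * A) *\<^sub>v col W 0"
    unfolding C_def using W A by (subst col_mult2[of _ "Suc m" "Suc m"]) auto
  also have "\<dots> = mat_adjoint W *\<^sub>v (A *\<^sub>v col W 0)"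
    using W A v Wv by (intro assoc_mult_mat_vec[of _ "Suc m" "Suc m"]) auto
  also have "\<dots> = e \<cdot>\<^sub>v (mat_adjoint W *\<^sub>v col W 0)"
    using mult_mat_vec[OF mat_adjoint_carrier[OF W(1)] v] Av Wv by simp
  also have "mat_adjoint W *\<^sub>v col W 0 = unit_vec (Suc m) 0"
    using col_mult2[of "mat_adjoint W" "Suc m" "Suc m" W "Suc m" 0] W by simp
  finally have col0: "col C 0 = e \<cdot>\<^sub>v unit_vec (Suc m) 0" .
  define B where "B = mat m m (\<lambda>(i, j). C $$ (Suc i, Suc j))"
  note CB = hermitian_first_col_eigen[OF C C_herm col0, folded B_def]
  have "W * C * mat_adjoint W = (W * mat_adjoint W) * A * (W * mat_adjoint W)"
    using W A by (simp add: C_def mult_carrier_mat_square assoc_mult_mat[of _ "Suc m" "Suc m" _ "Suc m" _ "Suc m"])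
  hence "A = W * C * mat_adjoint W" using WW' A by simp
  moreover have "B \<in> carrier_mat m m" by (simp add: B_def)
  ultimately show ?thesis using that[OF Wu CB(1) _ CB(2)] CB(3) by simp
qed

theorem hermitian_spectral:
  assumes "A \<in> carrier_mat n n" "mat_adjoint A = A"
  obtains U d where "unitary_mat n U" "\<And>i. Im (d i) = 0" "A = U * mat_diag n d * mat_adjoint U"
  using assms
proof (induction n arbitrary: A thesis)
  case 0
  show ?case
    by (rule "0.prems"(1)[of "1\<^sub>m 0" "\<lambda>_. 0"]) (use "0.prems" in \<open>auto simp: unitary_mat_def\<close>)
next
  case (Suc m)
  obtain W e B where Wu: "unitary_mat (Suc m) W" and e: "Im e = 0" and B: "B \<in> carrier_mat m m"
    and B_herm: "mat_adjoint B = B" and AW: "A = W * corner_block e B * mat_adjoint W"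
    using hermitian_deflation[OF Suc.prems(2,3)] .
  obtain U' d' where U'u: "unitary_mat m U'" and d': "\<And>i. Im (d' i) = 0"
    and BU': "B = U' * mat_diag m d' * mat_adjoint U'"
    using Suc.IH[OF _ B B_herm] by blast
  define d where "d i = (if i = 0 then e else d' (i - 1))" for i
  define V where "V = corner_block 1 U'"
  note U' = unitary_matD[OF U'u] and W = unitary_matD[OF Wu]
  have Vu: "unitary_mat (Suc m) V" unfolding V_def by (rule unitary_corner_block[OF U'u])
  have "corner_block e B = V * mat_diag (Suc m) d * mat_adjoint V"
    using U' by (simp add: BU' V_def d_def mat_adjoint_corner_block corner_block_mult[of _ m m _ m]
        flip: corner_block_mat_diag)
  hence "A = (W * V) * mat_diag (Suc m) d * mat_adjoint (W * V)"
    using W Vu[THEN unitary_matD(1)]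
    by (simp add: AW mat_adjoint_mult[of _ "Suc m" "Suc m" _ "Suc m"] mult_carrier_mat_square
        assoc_mult_mat[of _ "Suc m" "Suc m" _ "Suc m" _ "Suc m"])
  moreover have "Im (d i) = 0" for i using e d' by (simp add: d_def)
  ultimately show ?case using Suc.prems(1) unitary_mult[OF Wu Vu] by blast
qed

section \<open>A variational lower bound for the trace norm\<close>

lemma proots_prod_linear: "proots (\<Prod>a\<leftarrow>as. [:- a, 1:]) = mset (as :: complex list)"
proof (induction as)
  case (Cons a as)
  have "proots [:- a, 1:] = {#a#}"
    by (rule multiset_eqI) (use order_linear_power'[of a "Suc 0"] in simp)
  moreover have "proots (\<Prod>a\<leftarrow>a # as. [:- a, 1:]) = proots [:- a, 1:] + proots (\<Prod>a\<leftarrow>as. [:- a, 1:])"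
    unfolding list.map prod_list.Cons by (rule proots_mult) (auto simp: prod_list_zero_iff)
  ultimately show ?case using Cons.IH by simp
qed simp

lemma mat_adjoint_mat_diag: "mat_adjoint (mat_diag n d) = mat_diag n (\<lambda>i. cnj (d i))"
  by (rule eq_matI) (auto simp: mat_diag_def)

lemma trace_norm_unitary_diag:
  assumes U: "unitary_mat n U"
  shows "trace_norm (U * mat_diag n d * mat_adjoint U) = (\<Sum>i<n. cmod (d i))"
proof -
  note U' = unitary_matD[OF U] and UU' = unitary_mult_adjoint[OF U]
  let ?A = "U * mat_diag n d * mat_adjoint U"
  define dd where "dd = (\<lambda>i. cnj (d i) * d i)"
  have "mat_adjoint ?A * ?A = U * (mat_diag n (\<lambda>i. cnj (d i)) * mat_diag n d) * mat_adjoint U"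
    using U'(1) by (simp add: mat_adjoint_mult[of _ n n _ n] mat_adjoint_mat_diag mult_carrier_mat_square
        assoc_mult_mat[of _ n n _ n _ n] unitary_adjoint_mult_cancel[OF U, where m = n] del: mat_diag_diag)
  also have "\<dots> = U * mat_diag n dd * mat_adjoint U" by (simp add: dd_def)
  finally have "similar_mat_wit (mat_adjoint ?A * ?A) (mat_diag n dd) U (mat_adjoint U)"
    unfolding similar_mat_wit_def Let_def using U' UU' by auto
  hence "char_poly (mat_adjoint ?A * ?A) = char_poly (mat_diag n dd)"
    by (intro char_poly_similar) (auto simp: similar_mat_def)
  also have "\<dots> = (\<Prod>a\<leftarrow>diag_mat (mat_diag n dd). [:- a, 1:])"
    by (rule char_poly_upper_triangular[of _ n]) (auto simp: upper_triangular_def mat_diag_def)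
  also have "diag_mat (mat_diag n dd) = map dd [0..<n]"
    by (auto simp: diag_mat_def mat_diag_def)
  finally have cp: "char_poly (mat_adjoint ?A * ?A) = (\<Prod>a\<leftarrow>map dd [0..<n]. [:- a, 1:])" .
  have "trace_norm ?A = (\<Sum>x\<in>#mset (map dd [0..<n]). sqrt (Re x))"
    unfolding trace_norm_def cp proots_prod_linear ..
  also have "\<dots> = (\<Sum>i<n. sqrt (Re (dd i)))"
    by (simp add: sum_mset_sum_list sum_list_sum_nth atLeast0LessThan flip: mset_map)
  also have "\<dots> = (\<Sum>i<n. cmod (d i))" by (simp add: dd_def cnj_mult_self flip: of_real_power)
  finally show ?thesis .
qed

lemma index_unitary_diag:
  assumes U: "U \<in> carrier_mat m n" and i: "i < m" and j: "j < m"
  shows "(U * mat_diag n d * mat_adjoint U) $$ (i, j) = (\<Sum>k<n. U $$ (i, k) * d k * cnj (U $$ (j, k)))"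
  using U i j by (simp add: mat_diag_mult_right[OF U] scalar_prod_def atLeast0LessThan)

lemma mtrace_unitary_diag_mult:
  assumes U: "U \<in> carrier_mat n n" and M: "M \<in> carrier_mat n n"
  shows "mtrace (U * mat_diag n d * mat_adjoint U * M) = (\<Sum>k<n. d k * cinner (col U k) (M *\<^sub>v col U k))"
proof -
  let ?A = "U * mat_diag n d * mat_adjoint U"
  have "mtrace (?A * M) = (\<Sum>a<n. \<Sum>b<n. ?A $$ (a, b) * M $$ (b, a))"
    unfolding mtrace_def using U M by (auto simp: scalar_prod_def atLeast0LessThan intro!: sum.cong)
  also have "\<dots> = (\<Sum>a<n. \<Sum>b<n. \<Sum>k<n. U $$ (a, k) * d k * cnj (U $$ (b, k)) * M $$ (b, a))"
  proof (intro sum.cong refl)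
    fix a b assume "a \<in> {..<n}" "b \<in> {..<n}"
    thus "?A $$ (a, b) * M $$ (b, a) = (\<Sum>k<n. U $$ (a, k) * d k * cnj (U $$ (b, k)) * M $$ (b, a))"
      using U by (subst index_unitary_diag[OF U]) (auto simp: sum_distrib_right)
  qed
  also have "\<dots> = (\<Sum>k<n. \<Sum>b<n. \<Sum>a<n. U $$ (a, k) * d k * cnj (U $$ (b, k)) * M $$ (b, a))"
    by (subst sum.swap, subst (2) sum.swap, subst sum.swap) (rule refl)
  also have "\<dots> = (\<Sum>k<n. d k * cinner (col U k) (M *\<^sub>v col U k))"
    using U M by (auto simp: cinner_eq_sum[of _ n] scalar_prod_def sum_distrib_left atLeast0LessThan
        ac_simps intro!: sum.cong)
  finally show ?thesis .
qed

lemma cmod_mtrace_mult_le_trace_norm: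
  assumes A: "A \<in> carrier_mat n n" and herm: "mat_adjoint A = A" and M: "M \<in> carrier_mat n n"
    and M_bound: "\<And>q. q \<in> carrier_vec n \<Longrightarrow> cinner q q = 1 \<Longrightarrow> cmod (cinner q (M *\<^sub>v q)) \<le> 1"
  shows "cmod (mtrace (A * M)) \<le> trace_norm A"
proof -
  obtain U d where Uu: "unitary_mat n U" and AU: "A = U * mat_diag n d * mat_adjoint U"
    using hermitian_spectral[OF A herm] by metis
  note U = unitary_matD(1)[OF Uu]
  have "cmod (mtrace (A * M)) = cmod (\<Sum>k<n. d k * cinner (col U k) (M *\<^sub>v col U k))"
    unfolding AU using mtrace_unitary_diag_mult[OF U M] by simp
  also have "\<dots> \<le> (\<Sum>k<n. cmod (d k) * cmod (cinner (col U k) (M *\<^sub>v col U k)))"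
    by (rule order_trans[OF norm_sum]) (simp add: norm_mult)
  also have "\<dots> \<le> (\<Sum>k<n. cmod (d k))"
    using M_bound unitary_cinner_col[OF Uu] U by (intro sum_mono mult_right_le_one_le) auto
  also have "\<dots> = trace_norm A" unfolding AU trace_norm_unitary_diag[OF Uu] ..
  finally show ?thesis .
qed

fun orthonormal :: "nat \<Rightarrow> complex vec list \<Rightarrow> bool" where
  "orthonormal n [] = True"
| "orthonormal n (e # es) \<longleftrightarrow> e \<in> carrier_vec n \<and> cinner e e = 1 \<and>
     (\<forall>f\<in>set es. cinner e f = 0 \<and> cinner f e = 0) \<and> orthonormal n es"

lemma orthonormal_carrier: "orthonormal n es \<Longrightarrow> set es \<subseteq> carrier_vec n"
  by (induction es) auto

lemma bessel_inequality:
  "orthonormal n es \<Longrightarrow> x \<in> carrier_vec n \<Longrightarrow>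
    (\<Sum>e\<leftarrow>es. (cmod (cinner e x))\<^sup>2) \<le> Re (cinner x x)"
proof (induction es arbitrary: x)
  case Nil thus ?case using cinner_self_nonneg[of x] by simp
next
  case (Cons e es x)
  hence e: "e \<in> carrier_vec n" and e1: "cinner e e = 1" and es: "orthonormal n es"
    and orth: "\<forall>f\<in>set es. cinner e f = 0 \<and> cinner f e = 0" and x: "x \<in> carrier_vec n" by auto
  define c where "c = cinner e x"
  define x' where "x' = x - c \<cdot>\<^sub>v e"
  have x': "x' \<in> carrier_vec n" unfolding x'_def using x e by auto
  have "cinner x' x' = cinner x x - cnj c * c"
    unfolding x'_def using x e e1 cinner_commute[OF e x]
    by (simp add: cinner_minus_left[of _ n] cinner_minus_right[of _ n] cinner_smult_left[of _ n]
        cinner_smult_right c_def algebra_simps)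
  hence "Re (cinner x' x') = Re (cinner x x) - (cmod c)\<^sup>2" by (simp add: cnj_mult_self)
  moreover have "(\<Sum>f\<leftarrow>es. (cmod (cinner f x'))\<^sup>2) = (\<Sum>f\<leftarrow>es. (cmod (cinner f x))\<^sup>2)"
    unfolding x'_def using x e orth
    by (intro arg_cong[where f = sum_list] map_cong) (simp_all add: cinner_minus_right[of _ n] cinner_smult_right)
  ultimately show ?case using Cons.IH[OF es x'] by (simp add: c_def)
qed

text \<open>Both the output states and the distinguishing measurements below are of this form.\<close>

fun proj_sum :: "nat \<Rightarrow> (real \<times> complex vec) list \<Rightarrow> complex mat" where
  "proj_sum n [] = 0\<^sub>m n n"
| "proj_sum n ((s, e) # xs) = complex_of_real s \<cdot>\<^sub>m proj e + proj_sum n xs"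

lemma proj_carrier [simp]: "v \<in> carrier_vec n \<Longrightarrow> proj v \<in> carrier_mat n n"
  unfolding proj_def by auto

lemma proj_sum_carrier [simp]: "snd ` set xs \<subseteq> carrier_vec n \<Longrightarrow> proj_sum n xs \<in> carrier_mat n n"
  by (induction xs) auto

lemma mat_adjoint_proj: "mat_adjoint (proj x) = proj x"
  by (rule eq_matI) (auto simp: proj_def)

lemma mat_adjoint_proj_sum:
  "snd ` set xs \<subseteq> carrier_vec n \<Longrightarrow> mat_adjoint (proj_sum n xs) = proj_sum n xs"
  by (induction xs) (auto simp: mat_adjoint_add[of _ n n] mat_adjoint_smult mat_adjoint_proj)

lemma smult_mult_mat_vec:
  "A \<in> carrier_mat n m \<Longrightarrow> v \<in> carrier_vec m \<Longrightarrow>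
    (c \<cdot>\<^sub>m A) *\<^sub>v v = c \<cdot>\<^sub>v (A *\<^sub>v (v :: complex vec))"
  by (rule eq_vecI) (auto simp: scalar_prod_def sum_distrib_left ac_simps)

lemma proj_mult_vec:
  "e \<in> carrier_vec n \<Longrightarrow> q \<in> carrier_vec n \<Longrightarrow> proj e *\<^sub>v q = cinner e q \<cdot>\<^sub>v e"
  by (intro eq_vecI) (auto simp: proj_def scalar_prod_def cinner_eq_sum[of _ n] sum_distrib_left
      ac_simps atLeast0LessThan)

lemma cinner_proj_sum:
  assumes "snd ` set ys \<subseteq> carrier_vec n" "q \<in> carrier_vec n"
  shows "cinner q (proj_sum n ys *\<^sub>v q) = complex_of_real (\<Sum>(t, f)\<leftarrow>ys. t * (cmod (cinner f q))\<^sup>2)"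
  using assms
proof (induction ys)
  case (Cons y ys)
  obtain t f where y: "y = (t, f)" by fastforce
  have f: "f \<in> carrier_vec n" and ys: "snd ` set ys \<subseteq> carrier_vec n" using Cons.prems y by auto
  have "proj_sum n (y # ys) *\<^sub>v q = complex_of_real t \<cdot>\<^sub>v (cinner f q \<cdot>\<^sub>v f) + proj_sum n ys *\<^sub>v q"
    using f ys Cons.prems(2)
    by (simp add: y add_mult_distrib_mat_vec[of _ n n] smult_mult_mat_vec[of _ n n] proj_mult_vec[OF f])
  moreover have "complex_of_real t \<cdot>\<^sub>v (cinner f q \<cdot>\<^sub>v f) \<in> carrier_vec n"
    "proj_sum n ys *\<^sub>v q \<in> carrier_vec n" using f Cons.prems(2) proj_sum_carrier[OF ys] by auto
  ultimately have "cinner q (proj_sum n (y # ys) *\<^sub>v q) =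
      complex_of_real t * (cinner f q * cinner q f) + cinner q (proj_sum n ys *\<^sub>v q)"
    by (simp add: cinner_add_right[of _ n] cinner_smult_right)
  thus ?case using Cons.IH[OF ys Cons.prems(2)] cinner_commute[OF f Cons.prems(2)]
    by (simp add: y mult_cnj_self)
qed (simp add: cinner_def)

lemma cmod_cinner_proj_sum_le_1:
  assumes on: "orthonormal n (map snd ys)" and ts: "\<forall>(t, f)\<in>set ys. \<bar>t\<bar> \<le> 1"
    and q: "q \<in> carrier_vec n" and q1: "cinner q q = 1"
  shows "cmod (cinner q (proj_sum n ys *\<^sub>v q)) \<le> 1"
proof -
  have "\<bar>\<Sum>(t, f)\<leftarrow>ys. t * (cmod (cinner f q))\<^sup>2\<bar> \<le> (\<Sum>(t, f)\<leftarrow>ys. (cmod (cinner f q))\<^sup>2)"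
    using ts
  proof (induction ys)
    case (Cons y ys)
    obtain t f where y: "y = (t, f)" by fastforce
    have "\<bar>t * (cmod (cinner f q))\<^sup>2\<bar> \<le> (cmod (cinner f q))\<^sup>2"
      using Cons.prems y by (auto simp: abs_mult mult_left_le_one_le)
    thus ?case using Cons by (auto simp: y intro: order_trans[OF abs_triangle_ineq])
  qed simp
  also have "\<dots> = (\<Sum>f\<leftarrow>map snd ys. (cmod (cinner f q))\<^sup>2)"
    by (induction ys) auto
  also have "\<dots> \<le> 1" using bessel_inequality[OF on q] q1 by simp
  finally show ?thesis
    using cinner_proj_sum[OF orthonormal_carrier[OF on, simplified] q] by simp
qed

lemma mtrace_add: "X \<in> carrier_mat n n \<Longrightarrow> Y \<in> carrier_mat n n \<Longrightarrow> mtrace (X + Y) = mtrace X + mtrace Y"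
  unfolding mtrace_def by (simp add: sum.distrib)

lemma mtrace_smult: "X \<in> carrier_mat n n \<Longrightarrow> mtrace (c \<cdot>\<^sub>m X) = c * mtrace X"
  unfolding mtrace_def by (simp add: sum_distrib_left)

lemma mtrace_mult_proj:
  "M \<in> carrier_mat n n \<Longrightarrow> x \<in> carrier_vec n \<Longrightarrow> mtrace (M * proj x) = cinner x (M *\<^sub>v x)"
  unfolding mtrace_def cinner_def
  by (auto simp: proj_def scalar_prod_def sum_distrib_left ac_simps atLeast0LessThan intro!: sum.cong)

lemma mtrace_mult_commute:
  assumes "A \<in> carrier_mat n m" "B \<in> carrier_mat m n"
  shows "mtrace (A * B) = mtrace (B * A)"
proof -
  have "mtrace (A * B) = (\<Sum>i<n. \<Sum>k<m. A $$ (i, k) * B $$ (k, i))"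
    using assms by (simp add: mtrace_def scalar_prod_def atLeast0LessThan)
  also have "\<dots> = (\<Sum>k<m. \<Sum>i<n. B $$ (k, i) * A $$ (i, k))"
    by (subst sum.swap) (simp add: mult.commute)
  also have "\<dots> = mtrace (B * A)"
    using assms by (simp add: mtrace_def scalar_prod_def atLeast0LessThan)
  finally show ?thesis .
qed

lemma mtrace_proj_mult:
  "M \<in> carrier_mat n n \<Longrightarrow> x \<in> carrier_vec n \<Longrightarrow> mtrace (proj x * M) = cinner x (M *\<^sub>v x)"
  using mtrace_mult_commute[of "proj x" n n M] mtrace_mult_proj[of M n x] by simp

lemma mtrace_proj_sum_mult:
  assumes xs: "snd ` set xs \<subseteq> carrier_vec n" and ys: "snd ` set ys \<subseteq> carrier_vec n"
  shows "mtrace (proj_sum n xs * proj_sum n ys) =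
    complex_of_real (\<Sum>(s, e)\<leftarrow>xs. \<Sum>(t, f)\<leftarrow>ys. s * t * (cmod (cinner f e))\<^sup>2)"
  using xs
proof (induction xs)
  case (Cons x xs)
  obtain s e where x: "x = (s, e)" by fastforce
  have e: "e \<in> carrier_vec n" and xs': "snd ` set xs \<subseteq> carrier_vec n" using Cons.prems x by auto
  have P: "proj e \<in> carrier_mat n n" "proj_sum n xs \<in> carrier_mat n n" "proj_sum n ys \<in> carrier_mat n n"
    using e xs' ys by auto
  have "proj_sum n (x # xs) * proj_sum n ys =
      complex_of_real s \<cdot>\<^sub>m (proj e * proj_sum n ys) + proj_sum n xs * proj_sum n ys"
    using P by (simp add: x add_mult_distrib_mat[of _ n n] mult_smult_assoc_mat[of _ n n])
  hence "mtrace (proj_sum n (x # xs) * proj_sum n ys) =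
      complex_of_real s * mtrace (proj e * proj_sum n ys) + mtrace (proj_sum n xs * proj_sum n ys)"
    using P by (simp add: mtrace_add[of _ n] mtrace_smult[of _ n])
  thus ?case
    using Cons.IH[OF xs'] ys e
    by (simp add: x mtrace_proj_mult[of _ n] cinner_proj_sum sum_list_const_mult
        case_prod_unfold mult.assoc)
qed (use proj_sum_carrier[OF ys] in \<open>simp add: mtrace_def\<close>)

lemma trace_norm_proj_sum_ge:
  assumes xs: "snd ` set xs \<subseteq> carrier_vec n" and on: "orthonormal n (map snd ys)"
    and ts: "\<forall>(t, f)\<in>set ys. \<bar>t\<bar> \<le> 1"
  shows "\<bar>\<Sum>(s, e)\<leftarrow>xs. \<Sum>(t, f)\<leftarrow>ys. s * t * (cmod (cinner f e))\<^sup>2\<bar>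
    \<le> trace_norm (proj_sum n xs)"
proof -
  have ys: "snd ` set ys \<subseteq> carrier_vec n" using orthonormal_carrier[OF on] by simp
  have "cmod (mtrace (proj_sum n xs * proj_sum n ys)) \<le> trace_norm (proj_sum n xs)"
    using xs ys cmod_cinner_proj_sum_le_1[OF on ts]
    by (intro cmod_mtrace_mult_le_trace_norm[of _ n]) (auto simp: mat_adjoint_proj_sum)
  thus ?thesis by (simp add: mtrace_proj_sum_mult[OF xs ys])
qed

section \<open>Tensor products\<close>

lemma sum_nat_mult_index: "(\<Sum>i<a * b. f i) = (\<Sum>x<a. \<Sum>y<b. f (x * b + y :: nat))"
proof -
  have "(\<Sum>i<a * b. f i) = (\<Sum>x<a. sum f {x * b..<x * b + b})"
    by (rule sum.nat_group[symmetric])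
  also have "\<dots> = (\<Sum>x<a. \<Sum>y<b. f (x * b + y))"
  proof (rule sum.cong[OF refl])
    fix x
    have "sum f {0 + x * b..<b + x * b} = sum (\<lambda>y. f (y + x * b)) {0..<b}"
      by (rule sum.shift_bounds_nat_ivl)
    thus "sum f {x * b..<x * b + b} = (\<Sum>y<b. f (x * b + y))"
      by (simp add: atLeast0LessThan add.commute)
  qed
  finally show ?thesis .
qed

lemma mult_add_div_mod: "y < (b :: nat) \<Longrightarrow> (x * b + y) div b = x" "y < b \<Longrightarrow> (x * b + y) mod b = y"
  by auto

lemma div_mod_less_mult: "i < a * (b :: nat) \<Longrightarrow> i div b < a \<and> i mod b < b"
  by (cases "b = 0") (auto simp: div_less_iff_less_mult)

lemma kron_vec_dim [simp]: "dim_vec (kron_vec u v) = dim_vec u * dim_vec v"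
  unfolding kron_vec_def by simp

lemma cinner_kron_vec:
  assumes "dim_vec u' = dim_vec u" "dim_vec v' = dim_vec v"
  shows "cinner (kron_vec u v) (kron_vec u' v') = cinner u u' * cinner v v'"
proof -
  let ?a = "dim_vec u" and ?b = "dim_vec v"
  have "cinner (kron_vec u v) (kron_vec u' v') =
    (\<Sum>i<?a * ?b. cnj (u $ (i div ?b) * v $ (i mod ?b)) * (u' $ (i div ?b) * v' $ (i mod ?b)))"
    unfolding cinner_def kron_vec_def using assms by (auto intro!: sum.cong)
  also have "\<dots> = (\<Sum>x<?a. \<Sum>y<?b. cnj (u $ x * v $ y) * (u' $ x * v' $ y))"
  proof (subst sum_nat_mult_index, intro sum.cong refl)
    fix x y assume "y \<in> {..<?b}"
    hence "(x * ?b + y) div ?b = x" "(x * ?b + y) mod ?b = y" by (simp_all add: mult_add_div_mod)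
    thus "cnj (u $ ((x * ?b + y) div ?b) * v $ ((x * ?b + y) mod ?b)) *
        (u' $ ((x * ?b + y) div ?b) * v' $ ((x * ?b + y) mod ?b)) =
        cnj (u $ x * v $ y) * (u' $ x * v' $ y)" by simp
  qed
  also have "\<dots> = cinner u u' * cinner v v'"
    unfolding cinner_def using assms by (simp add: sum_product ac_simps)
  finally show ?thesis .
qed

lemma kron_proj: "kron_mat (proj u) (proj v) = proj (kron_vec u v)"
  by (rule eq_matI) (auto simp: kron_mat_def proj_def kron_vec_def div_mod_less_mult)

fun kron_vecs :: "complex vec list \<Rightarrow> complex vec" where
  "kron_vecs [] = vec 1 (\<lambda>_. 1)"
| "kron_vecs (x # xs) = kron_vec x (kron_vecs xs)"

lemma kron_mats_map_proj: "kron_mats (map proj xs) = proj (kron_vecs xs)"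
proof (induction xs)
  case Nil show ?case by (rule eq_matI) (auto simp: proj_def)
qed (simp add: kron_proj)

lemma kron_vecs_dim: "(\<forall>x\<in>set xs. dim_vec x = m) \<Longrightarrow> dim_vec (kron_vecs xs) = m ^ length xs"
  by (induction xs) auto

lemma cinner_kron_vecs_map:
  "(\<And>i. i \<in> set is \<Longrightarrow> dim_vec (g i) = dim_vec (f i)) \<Longrightarrow>
    cinner (kron_vecs (map f is)) (kron_vecs (map g is)) = (\<Prod>i\<leftarrow>is. cinner (f i) (g i))"
proof (induction "is")
  case (Cons a "is")
  have "dim_vec (kron_vecs (map g is)) = dim_vec (kron_vecs (map f is))"
    using Cons.prems by (induction "is") auto
  thus ?case using Cons by (simp add: cinner_kron_vec)
qed (simp add: cinner_def)

lemma mult_proj_mult_adjoint: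
  assumes U: "U \<in> carrier_mat n n" and x: "x \<in> carrier_vec n"
  shows "U * proj x * mat_adjoint U = proj (U *\<^sub>v x)"
proof -
  have Ux: "U * proj x = mat n n (\<lambda>(i, b). (U *\<^sub>v x) $ i * cnj (x $ b))"
    using U x by (intro eq_matI) (auto simp: proj_def scalar_prod_def sum_distrib_right mult.assoc)
  show ?thesis
    unfolding Ux
  proof (rule eq_matI)
    fix i j assume "i < dim_row (proj (U *\<^sub>v x))" "j < dim_col (proj (U *\<^sub>v x))"
    hence i: "i < n" and j: "j < n" using U by (auto simp: proj_def)
    have "(mat n n (\<lambda>(i, b). (U *\<^sub>v x) $ i * cnj (x $ b)) * mat_adjoint U) $$ (i, j) =
        (U *\<^sub>v x) $ i * cnj ((U *\<^sub>v x) $ j)"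
      using U x i j by (simp add: scalar_prod_def sum_distrib_left ac_simps)
    thus "(mat n n (\<lambda>(i, b). (U *\<^sub>v x) $ i * cnj (x $ b)) * mat_adjoint U) $$ (i, j) =
        proj (U *\<^sub>v x) $$ (i, j)"
      using U i j by (simp add: proj_def)
  qed (use U in \<open>auto simp: proj_def\<close>)
qed

section \<open>Effects and the fidelity bound\<close>

lemma psdD:
  assumes "psd n M"
  shows "M \<in> carrier_mat n n" "mat_adjoint M = M"
    "\<And>v. v \<in> carrier_vec n \<Longrightarrow> cinner v (M *\<^sub>v v) = complex_of_real (Re (cinner v (M *\<^sub>v v)))"
    "\<And>v. v \<in> carrier_vec n \<Longrightarrow> 0 \<le> Re (cinner v (M *\<^sub>v v))"
  using assms unfolding psd_def by (auto simp: complex_eq_iff Reals_def)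

lemma cinner_one_minus_mult_vec:
  assumes "M \<in> carrier_mat n n" "x \<in> carrier_vec n" "y \<in> carrier_vec n"
  shows "cinner x ((1\<^sub>m n - M) *\<^sub>v y) = cinner x y - cinner x (M *\<^sub>v y)"
proof -
  have "(1\<^sub>m n - M) *\<^sub>v y = y - M *\<^sub>v y"
    by (subst minus_mult_distrib_mat_vec[of _ n n]) (use assms in auto)
  thus ?thesis using assms by (simp add: cinner_minus_right[of _ n])
qed

lemma effect_expectation_bounds:
  assumes E: "effect n \<mu>" and x: "x \<in> carrier_vec n"
  shows "cinner x (\<mu> *\<^sub>v x) = complex_of_real (Re (cinner x (\<mu> *\<^sub>v x)))"
    "0 \<le> Re (cinner x (\<mu> *\<^sub>v x))" "Re (cinner x (\<mu> *\<^sub>v x)) \<le> Re (cinner x x)"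
proof -
  have P: "psd n \<mu>" and Q: "psd n (1\<^sub>m n - \<mu>)" using E unfolding effect_def by auto
  show "cinner x (\<mu> *\<^sub>v x) = complex_of_real (Re (cinner x (\<mu> *\<^sub>v x)))" "0 \<le> Re (cinner x (\<mu> *\<^sub>v x))"
    using psdD(3,4)[OF P x] .
  show "Re (cinner x (\<mu> *\<^sub>v x)) \<le> Re (cinner x x)"
    using psdD(4)[OF Q x] cinner_one_minus_mult_vec[OF psdD(1)[OF P] x x] by simp
qed

lemma quadratic_form_add_smult:
  assumes M: "M \<in> carrier_mat n n" and x: "x \<in> carrier_vec n" and y: "y \<in> carrier_vec n"
  shows "cinner (x + t \<cdot>\<^sub>v y) (M *\<^sub>v (x + t \<cdot>\<^sub>v y)) =
    cinner x (M *\<^sub>v x) + t * cinner x (M *\<^sub>v y) + cnj t * cinner y (M *\<^sub>v x) + cnj t * t * cinner y (M *\<^sub>v y)"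
proof -
  have "M *\<^sub>v (x + t \<cdot>\<^sub>v y) = M *\<^sub>v x + t \<cdot>\<^sub>v (M *\<^sub>v y)"
    using M x y by (simp add: mult_add_distrib_mat_vec mult_mat_vec)
  moreover have "M *\<^sub>v x \<in> carrier_vec n" "M *\<^sub>v y \<in> carrier_vec n" using M x y by auto
  ultimately show ?thesis using x y
    by (simp add: cinner_add_left[of _ n] cinner_add_right[of _ n] cinner_smult_left[of _ n]
        cinner_smult_right algebra_simps)
qed

lemma psd_cauchy_schwarz:
  assumes P: "psd n M" and x: "x \<in> carrier_vec n" and y: "y \<in> carrier_vec n"
  shows "(cmod (cinner x (M *\<^sub>v y)))\<^sup>2 \<le> Re (cinner x (M *\<^sub>v x)) * Re (cinner y (M *\<^sub>v y))"
proof -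
  note Pd = psdD[OF P]
  define a where "a = Re (cinner x (M *\<^sub>v x))"
  define b where "b = Re (cinner y (M *\<^sub>v y))"
  define m where "m = cinner x (M *\<^sub>v y)"
  have a0: "a \<ge> 0" and b0: "b \<ge> 0" unfolding a_def b_def using Pd(4) x y by auto
  have key: "0 \<le> a - 2 * r * (cmod m)\<^sup>2 + r\<^sup>2 * (cmod m)\<^sup>2 * b" for r :: real
  proof -
    define t where "t = - complex_of_real r * cnj m"
    have "cinner (x + t \<cdot>\<^sub>v y) (M *\<^sub>v (x + t \<cdot>\<^sub>v y)) =
      cinner x (M *\<^sub>v x) + t * m + cnj t * cnj m + cnj t * t * cinner y (M *\<^sub>v y)"
      unfolding quadratic_form_add_smult[OF Pd(1) x y] m_def cinner_hermitian_commute[OF Pd(1,2) x y] ..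
    also have "t * m = - complex_of_real (r * (cmod m)\<^sup>2)"
      unfolding t_def by (simp add: cnj_mult_self mult.assoc)
    also have "cnj t * cnj m = - complex_of_real (r * (cmod m)\<^sup>2)"
      unfolding t_def by (simp add: mult_cnj_self mult.assoc)
    also have "cnj t * t = complex_of_real (r\<^sup>2 * (cmod m)\<^sup>2)"
      unfolding t_def by (simp add: mult_cnj_self power2_eq_square algebra_simps)
    finally have "Re (cinner (x + t \<cdot>\<^sub>v y) (M *\<^sub>v (x + t \<cdot>\<^sub>v y))) =
        a - 2 * r * (cmod m)\<^sup>2 + r\<^sup>2 * (cmod m)\<^sup>2 * b"
      unfolding a_def b_def by simp
    thus ?thesis using Pd(4)[of "x + t \<cdot>\<^sub>v y"] x y by simp
  qed
  show ?thesis
  proof (cases "b = 0")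
    case True
    have "(cmod m)\<^sup>2 \<le> 0"
    proof (rule ccontr)
      assume "\<not> (cmod m)\<^sup>2 \<le> 0"
      hence "(cmod m)\<^sup>2 > 0" by simp
      thus False using key[of "(a + 1) / (cmod m)\<^sup>2"] True a0 by simp
    qed
    thus ?thesis using True by (simp add: m_def b_def)
  next
    case False
    hence b_pos: "b > 0" using b0 by simp
    have "0 \<le> a - (cmod m)\<^sup>2 / b"
      using key[of "1 / b"] b_pos by (simp add: power2_eq_square field_simps)
    hence "(cmod m)\<^sup>2 \<le> a * b" using b_pos by (simp add: field_simps)
    thus ?thesis unfolding m_def a_def b_def .
  qed
qed

lemma real_fidelity_inequality:
  fixes T a b M R :: real
  assumes T: "0 \<le> T" "T \<le> 1" and a: "0 \<le> a" "a \<le> 1" and b: "0 \<le> b" "b \<le> T"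
    and M0: "0 \<le> M" and M1: "M\<^sup>2 \<le> a * b" and M2: "M\<^sup>2 \<le> (1 - a) * (T - b)"
    and R: "\<bar>R\<bar> \<le> sqrt (1 - T) * M"
  shows "\<bar>b - T * a + 2 * R\<bar> \<le> sqrt T"
proof (cases "T = 0")
  case True
  hence "b = 0" "M = 0" using b M0 M2 by auto
  thus ?thesis using R True by simp
next
  case False
  hence T_pos: "T > 0" using T by simp
  define X where "X = \<bar>b - T * a\<bar>"
  define s where "s = sqrt (1 - T)"
  have ss: "s\<^sup>2 = 1 - T" unfolding s_def using T by simp
  have main: "X\<^sup>2 + T * (2 * M)\<^sup>2 \<le> T\<^sup>2"
  proof (cases "b + T * a \<le> T")
    case True
    have "X\<^sup>2 + T * (2 * M)\<^sup>2 \<le> (b - T * a)\<^sup>2 + 4 * T * (a * b)"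
      unfolding X_def using M1 T_pos by (simp add: power2_eq_square)
    also have "\<dots> = (b + T * a)\<^sup>2" by (simp add: power2_eq_square algebra_simps)
    also have "\<dots> \<le> T\<^sup>2" using True b a T by (intro power_mono) auto
    finally show ?thesis .
  next
    case False
    have "T * a \<le> T" using a T_pos by (simp add: mult_left_le)
    have "X\<^sup>2 + T * (2 * M)\<^sup>2 \<le> (b - T * a)\<^sup>2 + 4 * T * ((1 - a) * (T - b))"
      unfolding X_def using M2 T_pos by (simp add: power2_eq_square)
    also have "\<dots> = (2 * T - T * a - b)\<^sup>2" by (simp add: power2_eq_square algebra_simps)
    also have "\<dots> \<le> T\<^sup>2"
      using False b T_pos \<open>T * a \<le> T\<close> by (intro power_mono) auto
    finally show ?thesis .
  qed
  have "(X + s * (2 * M))\<^sup>2 \<le> (X\<^sup>2 / T + (2 * M)\<^sup>2) * (T + s\<^sup>2)"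
  proof -
    have "(X\<^sup>2 / T + (2 * M)\<^sup>2) * (T + s\<^sup>2) - (X + s * (2 * M))\<^sup>2 = (X * s - T * (2 * M))\<^sup>2 / T"
      using T_pos by (simp add: power2_eq_square field_simps)
    thus ?thesis using T_pos by (smt (verit) zero_le_divide_iff zero_le_power2)
  qed
  also have "\<dots> = (X\<^sup>2 + T * (2 * M)\<^sup>2) / T" using ss T_pos by (simp add: field_simps)
  also have "\<dots> \<le> T" using main T_pos by (simp add: divide_le_eq power2_eq_square)
  finally have "X + s * (2 * M) \<le> sqrt T" using real_le_rsqrt by blast
  moreover have "\<bar>b - T * a + 2 * R\<bar> \<le> X + 2 * \<bar>R\<bar>" unfolding X_def by simp
  ultimately show ?thesis using R unfolding s_def by simp
qed

lemma effect_orthogonal_bounds: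
  assumes E: "effect n \<mu>" and x: "x \<in> carrier_vec n" and x1: "cinner x x = 1"
    and z: "z \<in> carrier_vec n" and xz: "cinner x z = 0"
  defines "a \<equiv> Re (cinner x (\<mu> *\<^sub>v x))" and "b \<equiv> Re (cinner z (\<mu> *\<^sub>v z))"
    and "m \<equiv> cinner x (\<mu> *\<^sub>v z)" and "T \<equiv> Re (cinner z z)"
  shows "0 \<le> a" "a \<le> 1" "0 \<le> b" "b \<le> T" "(cmod m)\<^sup>2 \<le> a * b" "(cmod m)\<^sup>2 \<le> (1 - a) * (T - b)"
proof -
  have P: "psd n \<mu>" and Q: "psd n (1\<^sub>m n - \<mu>)" using E unfolding effect_def by auto
  note mu = psdD(1)[OF P]
  show "0 \<le> a" "a \<le> 1" using effect_expectation_bounds[OF E x] x1 by (simp_all add: a_def)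
  show "0 \<le> b" "b \<le> T" using effect_expectation_bounds[OF E z] by (simp_all add: b_def T_def)
  show "(cmod m)\<^sup>2 \<le> a * b" unfolding m_def a_def b_def by (rule psd_cauchy_schwarz[OF P x z])
  show "(cmod m)\<^sup>2 \<le> (1 - a) * (T - b)"
    using psd_cauchy_schwarz[OF Q x z]
    by (simp add: cinner_one_minus_mult_vec[OF mu] x z x1 xz a_def b_def m_def T_def)
qed

lemma effect_expectation_diff_le:
  assumes E: "effect n \<mu>" and x: "x \<in> carrier_vec n" and y: "y \<in> carrier_vec n"
    and x1: "cinner x x = 1" and y1: "cinner y y = 1"
  shows "\<bar>Re (cinner y (\<mu> *\<^sub>v y)) - Re (cinner x (\<mu> *\<^sub>v x))\<bar> \<le> sqrt (1 - (cmod (cinner x y))\<^sup>2)"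
proof -
  have mu: "\<mu> \<in> carrier_mat n n" and herm: "mat_adjoint \<mu> = \<mu>"
    using E unfolding effect_def by (auto dest: psdD)
  define c where "c = cinner x y"
  define z where "z = y - c \<cdot>\<^sub>v x"
  have z: "z \<in> carrier_vec n" unfolding z_def using x y by auto
  have xz: "cinner x z = 0" unfolding z_def c_def using x y x1
    by (simp add: cinner_minus_right[of _ n] cinner_smult_right)
  define a where "a = Re (cinner x (\<mu> *\<^sub>v x))"
  define b where "b = Re (cinner z (\<mu> *\<^sub>v z))"
  define m where "m = cinner x (\<mu> *\<^sub>v z)"
  define T where "T = Re (cinner z z)"
  note bounds = effect_orthogonal_bounds[OF E x x1 z xz, folded a_def b_def m_def T_def]
  have "cinner z z = 1 - cnj c * c"
    unfolding z_def using x y x1 y1 cinner_commute[OF x y]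
    by (simp add: cinner_minus_left[of _ n] cinner_minus_right[of _ n] cinner_smult_left[of _ n]
        cinner_smult_right c_def algebra_simps)
  hence Tc: "T = 1 - (cmod c)\<^sup>2" unfolding T_def by (simp add: cnj_mult_self)
  define R where "R = Re (cnj c * m)"
  have R: "\<bar>R\<bar> \<le> sqrt (1 - T) * cmod m"
    using abs_Re_le_cmod[of "cnj c * m"] by (simp add: R_def Tc norm_mult)
  have "y = c \<cdot>\<^sub>v x + z" unfolding z_def using x y by auto
  hence "cinner y (\<mu> *\<^sub>v y) = cinner (z + c \<cdot>\<^sub>v x) (\<mu> *\<^sub>v (z + c \<cdot>\<^sub>v x))"
    using comm_add_vec[of "c \<cdot>\<^sub>v x" n z] x z by simp
  also have "\<dots> = cinner z (\<mu> *\<^sub>v z) + c * cnj m + cnj c * m + cnj c * c * cinner x (\<mu> *\<^sub>v x)"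
    unfolding quadratic_form_add_smult[OF mu z x] m_def cinner_hermitian_commute[OF mu herm x z] ..
  also have "\<dots> = complex_of_real b + (cnj (cnj c * m) + cnj c * m) + complex_of_real ((cmod c)\<^sup>2 * a)"
    using effect_expectation_bounds(1)[OF E x] effect_expectation_bounds(1)[OF E z]
    by (simp add: a_def b_def cnj_mult_self)
  finally have "Re (cinner y (\<mu> *\<^sub>v y)) - Re (cinner x (\<mu> *\<^sub>v x)) = b - T * a + 2 * R"
    by (simp add: a_def R_def Tc algebra_simps)
  moreover have "\<bar>b - T * a + 2 * R\<bar> \<le> sqrt T"
    using bounds cinner_self_nonneg[of z] Tc R by (intro real_fidelity_inequality) (auto simp: T_def)
  ultimately show ?thesis by (simp add: Tc c_def)
qed

section \<open>The phase attack\<close>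

lemma kron_mat_dim [simp]:
  "dim_row (kron_mat A B) = dim_row A * dim_row B" "dim_col (kron_mat A B) = dim_col A * dim_col B"
  unfolding kron_mat_def by auto

lemma phase_gate_dim [simp]: "dim_row (phase_gate a) = 2" "dim_col (phase_gate a) = 2"
  unfolding phase_gate_def mat_of_rows_list_def by auto

lemma kron_mat_one: "kron_mat (1\<^sub>m a) (1\<^sub>m b) = 1\<^sub>m (a * b)"
proof (rule eq_matI)
  fix i j assume "i < dim_row (1\<^sub>m (a * b))" "j < dim_col (1\<^sub>m (a * b))"
  hence i: "i < a * b" and j: "j < a * b" by auto
  have "(i div b = j div b \<and> i mod b = j mod b) \<longleftrightarrow> i = j" by (metis div_mult_mod_eq)
  thus "kron_mat (1\<^sub>m a) (1\<^sub>m b) $$ (i, j) = 1\<^sub>m (a * b) $$ (i, j)"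
    using i j by (auto simp: kron_mat_def div_mod_less_mult)
qed (auto simp: kron_mat_def)

lemma kron_mat_pow_one: "kron_mat_pow (1\<^sub>m 2) n = 1\<^sub>m (2 ^ n)"
  by (induction n) (auto simp: kron_mat_one mult.commute)

lemma two_pow_pred: "k \<ge> 1 \<Longrightarrow> (2 :: nat) ^ (k - 1) * 2 = 2 ^ k"
  by (metis Suc_diff_le diff_Suc_1 power_Suc2)

definition phase_factor :: "real \<Rightarrow> nat \<Rightarrow> complex" where
  "phase_factor a i = (if even i then 1 else cis a)"

lemma A_alpha_carrier: "k \<ge> 1 \<Longrightarrow> A_alpha k a \<in> carrier_mat (2 ^ k) (2 ^ k)"
  using two_pow_pred[of k] unfolding A_alpha_def kron_mat_pow_one by (auto intro: carrier_matI)

lemma A_alpha_index: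
  assumes k: "k \<ge> 1" and i: "i < 2 ^ k" and j: "j < 2 ^ k"
  shows "A_alpha k a $$ (i, j) = (if i = j then phase_factor a i else 0)"
proof -
  have i': "i div 2 < 2 ^ (k - 1)" and j': "j div 2 < 2 ^ (k - 1)" using i j two_pow_pred[OF k] by auto
  have pg: "phase_gate a $$ (x, y) = (if x = y then (if x = 0 then 1 else cis a) else 0)"
    if "x < 2" "y < 2" for x y
    using that unfolding phase_gate_def mat_of_rows_list_def
    by (cases x; cases y) (auto simp: less_2_cases_iff cis_conv_exp)
  have "A_alpha k a $$ (i, j) =
      1\<^sub>m (2 ^ (k - 1)) $$ (i div 2, j div 2) * phase_gate a $$ (i mod 2, j mod 2)"
    unfolding A_alpha_def kron_mat_pow_one kron_mat_def using i j two_pow_pred[OF k] by simp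
  also have "\<dots> = (if i div 2 = j div 2 then 1 else 0) *
      (if i mod 2 = j mod 2 then (if i mod 2 = 0 then 1 else cis a) else 0)"
    using i' j' by (simp add: pg)
  also have "\<dots> = (if i = j then phase_factor a i else 0)"
  proof -
    have "(i div 2 = j div 2 \<and> i mod 2 = j mod 2) \<longleftrightarrow> i = j" by (metis div_mult_mod_eq)
    thus ?thesis unfolding phase_factor_def by (auto simp: even_iff_mod_2_eq_zero)
  qed
  finally show ?thesis .
qed

lemma A_alpha_mult_vec:
  assumes k: "k \<ge> 1" and u: "u \<in> carrier_vec (2 ^ k)"
  shows "A_alpha k a *\<^sub>v u = vec (2 ^ k) (\<lambda>i. phase_factor a i * u $ i)"
proof (rule eq_vecI)
  fix i assume "i < dim_vec (vec (2 ^ k) (\<lambda>i. phase_factor a i * u $ i))"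
  hence i: "i < 2 ^ k" by simp
  have "(A_alpha k a *\<^sub>v u) $ i = (\<Sum>j\<in>{0..<2 ^ k}. A_alpha k a $$ (i, j) * u $ j)"
    using A_alpha_carrier[OF k, of a] u i by (simp add: scalar_prod_def)
  also have "\<dots> = (\<Sum>j\<in>{0..<2 ^ k}. if i = j then phase_factor a i * u $ j else 0)"
    using i by (intro sum.cong) (auto simp: A_alpha_index[OF k])
  finally show "(A_alpha k a *\<^sub>v u) $ i = vec (2 ^ k) (\<lambda>i. phase_factor a i * u $ i) $ i"
    using i by simp
qed (use A_alpha_carrier[OF k, of a] in auto)

lemma A_alpha_unitary:
  assumes k: "k \<ge> 1" shows "unitary_mat (2 ^ k) (A_alpha k a)"
  unfolding unitary_mat_def
proof (intro conjI eq_matI)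
  fix i j assume "i < dim_row (1\<^sub>m (2 ^ k))" "j < dim_col (1\<^sub>m (2 ^ k))"
  hence i: "i < 2 ^ k" and j: "j < 2 ^ k" by auto
  have "(mat_adjoint (A_alpha k a) * A_alpha k a) $$ (i, j) =
      (\<Sum>l\<in>{0..<2 ^ k}. cnj (A_alpha k a $$ (l, i)) * A_alpha k a $$ (l, j))"
    using A_alpha_carrier[OF k, of a] i j by (auto simp: scalar_prod_def intro!: sum.cong)
  also have "\<dots> = (\<Sum>l\<in>{0..<2 ^ k}. if l = i then cnj (phase_factor a i) * (if i = j then phase_factor a i else 0) else 0)"
    using i j by (intro sum.cong) (auto simp: A_alpha_index[OF k])
  also have "\<dots> = 1\<^sub>m (2 ^ k) $$ (i, j)"
    using i j by (simp add: phase_factor_def cis_cnj cis_mult)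
  finally show "(mat_adjoint (A_alpha k a) * A_alpha k a) $$ (i, j) = 1\<^sub>m (2 ^ k) $$ (i, j)" .
qed (use A_alpha_carrier[OF k, of a] in auto)

lemma cmod_add_cis_mult_ge:
  assumes "0 \<le> X" "0 \<le> Y" "X + Y = 1"
  shows "(1 + cos a) / 2 \<le> (cmod (complex_of_real X + cis a * complex_of_real Y))\<^sup>2"
proof -
  have "(cmod (complex_of_real X + cis a * complex_of_real Y))\<^sup>2 = (X + Y * cos a)\<^sup>2 + (Y * sin a)\<^sup>2"
    by (simp add: cmod_power2 mult.commute)
  also have "\<dots> = (X + Y)\<^sup>2 - 2 * (X * Y) * (1 - cos a)"
  proof -
    have "(Y * sin a)\<^sup>2 = Y\<^sup>2 - (Y * cos a)\<^sup>2"
      by (simp add: power_mult_distrib sin_squared_eq algebra_simps)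
    thus ?thesis by (simp add: power2_eq_square algebra_simps)
  qed
  also have "\<dots> \<ge> (1 + cos a) / 2"
  proof -
    have "4 * (X * Y) \<le> (X + Y)\<^sup>2" using sum_squares_ge_zero[of "X - Y" 0]
      by (simp add: power2_eq_square algebra_simps)
    thus ?thesis using assms mult_right_mono[of "X * Y" "1 / 4" "1 - cos a"] by simp
  qed
  finally show ?thesis .
qed

lemma cmod_cinner_A_alpha_ge:
  assumes k: "k \<ge> 1" and u: "u \<in> carrier_vec (2 ^ k)" and u1: "cinner u u = 1"
  shows "(1 + cos a) / 2 \<le> (cmod (cinner u (A_alpha k a *\<^sub>v u)))\<^sup>2"
proof -
  define X where "X = (\<Sum>i<2 ^ k. if even i then (cmod (u $ i))\<^sup>2 else 0)"
  define Y where "Y = (\<Sum>i<2 ^ k. if even i then 0 else (cmod (u $ i))\<^sup>2)"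
  have "X + Y = (\<Sum>i<2 ^ k. (cmod (u $ i))\<^sup>2)"
    unfolding X_def Y_def sum.distrib[symmetric] by (rule sum.cong) auto
  also have "complex_of_real \<dots> = cinner u u" using cinner_self[of u] u by simp
  finally have XY: "X + Y = 1" using u1 by (metis of_real_eq_1_iff)
  have "cinner u (A_alpha k a *\<^sub>v u) = (\<Sum>i<2 ^ k. cnj (u $ i) * (phase_factor a i * u $ i))"
    unfolding A_alpha_mult_vec[OF k u] cinner_def by simp
  also have "\<dots> = (\<Sum>i<2 ^ k. complex_of_real (if even i then (cmod (u $ i))\<^sup>2 else 0)
      + cis a * complex_of_real (if even i then 0 else (cmod (u $ i))\<^sup>2))"
    by (rule sum.cong) (auto simp: phase_factor_def cnj_mult_self)
  also have "\<dots> = complex_of_real X + cis a * complex_of_real Y"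
    unfolding X_def Y_def by (simp add: sum.distrib sum_distrib_left)
  finally show ?thesis
    using cmod_add_cis_mult_ge[of X Y a] XY by (simp add: X_def Y_def sum_nonneg)
qed

lemma attacked_unitary:
  "k \<ge> 1 \<Longrightarrow> unitary_mat (2 ^ k) U \<Longrightarrow> unitary_mat (2 ^ k) (attacked k after a U)"
  unfolding attacked_def using unitary_mult A_alpha_unitary by auto

lemma cmod_cinner_attacked_ge:
  assumes k: "k \<ge> 1" and U: "unitary_mat (2 ^ k) U" and u: "u \<in> carrier_vec (2 ^ k)"
    and u1: "cinner u u = 1"
  shows "(1 + cos a) / 2 \<le> (cmod (cinner (U *\<^sub>v u) (attacked k after a U *\<^sub>v u)))\<^sup>2"
proof (cases after)
  case True
  have "U *\<^sub>v u \<in> carrier_vec (2 ^ k)" "cinner (U *\<^sub>v u) (U *\<^sub>v u) = 1"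
    using unitary_matD(1)[OF U] u u1 unitary_cinner[OF U u u] by auto
  thus ?thesis
    using True cmod_cinner_A_alpha_ge[OF k] unitary_matD(1)[OF U] A_alpha_carrier[OF k, of a] u
    by (simp add: attacked_def assoc_mult_mat_vec[of _ "2 ^ k" "2 ^ k" _ "2 ^ k"])
next
  case False
  have "cinner (U *\<^sub>v u) (U *\<^sub>v (A_alpha k a *\<^sub>v u)) = cinner u (A_alpha k a *\<^sub>v u)"
    using unitary_cinner[OF U u] A_alpha_carrier[OF k, of a] u by auto
  thus ?thesis
    using False cmod_cinner_A_alpha_ge[OF k u u1] unitary_matD(1)[OF U] A_alpha_carrier[OF k, of a] u
    by (simp add: attacked_def assoc_mult_mat_vec[of _ "2 ^ k" "2 ^ k" _ "2 ^ k"])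
qed

section \<open>Acceptance probabilities\<close>

definition test_rounds :: "nat \<Rightarrow> nat \<Rightarrow> nat list" where
  "test_rounds n l = filter (\<lambda>i. i \<noteq> l) [1..<n + 2]"

lemma set_test_rounds: "set (test_rounds n l) = {1..n + 1} - {l}"
  unfolding test_rounds_def by auto

lemma length_test_rounds: "l \<in> {1..n + 1} \<Longrightarrow> length (test_rounds n l) = n"
proof -
  assume l: "l \<in> {1..n + 1}"
  have "length (test_rounds n l) = card ({1..n + 1} - {l})"
    unfolding test_rounds_def by (subst distinct_length_filter) (auto intro: arg_cong[where f = card])
  thus ?thesis using l by (simp add: card_Diff_singleton)
qed

definition test_state ::
  "(nat \<Rightarrow> nat \<Rightarrow> complex mat) \<Rightarrow> (nat \<Rightarrow> nat \<Rightarrow> complex vec) \<Rightarrow> nat \<Rightarrow> nat \<Rightarrow> complex vec"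
where
  "test_state T chi n l = kron_vecs (map (\<lambda>i. T n i *\<^sub>v chi n i) (test_rounds n l))"

context
  fixes d n :: nat and T :: "nat \<Rightarrow> nat \<Rightarrow> complex mat" and chi :: "nat \<Rightarrow> nat \<Rightarrow> complex vec"
  assumes T: "\<And>i. i \<in> {1..n + 1} \<Longrightarrow> unitary_mat d (T n i)"
    and chi: "\<And>i. i \<in> {1..n + 1} \<Longrightarrow> unit_vector d (chi n i)"
begin

lemma round_output:
  assumes i: "i \<in> {1..n + 1}"
  shows "T n i *\<^sub>v chi n i \<in> carrier_vec d" "cinner (T n i *\<^sub>v chi n i) (T n i *\<^sub>v chi n i) = 1"
proof -
  have c: "chi n i \<in> carrier_vec d" "cinner (chi n i) (chi n i) = 1"
    using chi[OF i] by (auto simp: unit_vector_def)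
  show "T n i *\<^sub>v chi n i \<in> carrier_vec d" using unitary_matD(1)[OF T[OF i]] c by auto
  show "cinner (T n i *\<^sub>v chi n i) (T n i *\<^sub>v chi n i) = 1" using unitary_cinner[OF T[OF i] c(1) c(1)] c by simp
qed

lemma test_state_carrier:
  assumes l: "l \<in> {1..n + 1}"
  shows "test_state T chi n l \<in> carrier_vec (d ^ n)"
proof (rule carrier_vecI)
  have dims: "\<forall>x\<in>set (map (\<lambda>i. T n i *\<^sub>v chi n i) (test_rounds n l)). dim_vec x = d"
  proof
    fix x assume "x \<in> set (map (\<lambda>i. T n i *\<^sub>v chi n i) (test_rounds n l))"
    then obtain i where "i \<in> set (test_rounds n l)" and x: "x = T n i *\<^sub>v chi n i" by auto
    hence i: "i \<in> {1..n + 1}" by (simp add: set_test_rounds)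
    show "dim_vec x = d" using carrier_vecD[OF round_output(1)[OF i]] x by simp
  qed
  thus "dim_vec (test_state T chi n l) = d ^ n"
    using kron_vecs_dim[OF dims] length_test_rounds[OF l] by (simp add: test_state_def)
qed

lemma test_state_unit: "cinner (test_state T chi n l) (test_state T chi n l) = 1"
  unfolding test_state_def
  by (subst cinner_kron_vecs_map) (auto simp: round_output set_test_rounds intro!: prod_list_neutral)

lemma accept_prob_eq_test_state:
  assumes l: "l \<in> {1..n + 1}" and \<mu>: "\<mu> n \<in> carrier_mat (d ^ n) (d ^ n)"
  shows "accept_prob \<mu> T chi n l = cinner (test_state T chi n l) (\<mu> n *\<^sub>v test_state T chi n l)"
proof -
  have rounds: "map (\<lambda>i. T n i * proj (chi n i) * mat_adjoint (T n i)) (test_rounds n l) =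
      map proj (map (\<lambda>i. T n i *\<^sub>v chi n i) (test_rounds n l))"
    unfolding map_map comp_def
  proof (rule map_cong[OF refl])
    fix i assume "i \<in> set (test_rounds n l)"
    hence i: "i \<in> {1..n + 1}" by (simp add: set_test_rounds)
    show "T n i * proj (chi n i) * mat_adjoint (T n i) = proj (T n i *\<^sub>v chi n i)"
      using unitary_matD(1)[OF T[OF i]] chi[OF i] by (simp add: unit_vector_def mult_proj_mult_adjoint)
  qed
  have "kron_mats (map (\<lambda>i. T n i * proj (chi n i) * mat_adjoint (T n i)) (test_rounds n l)) =
      proj (test_state T chi n l)"
    unfolding rounds kron_mats_map_proj test_state_def ..
  thus ?thesis
    unfolding accept_prob_def test_rounds_def[symmetric]
    using mtrace_mult_proj[OF \<mu> test_state_carrier[OF l]] by simp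
qed

lemma accept_prob_bounds:
  assumes l: "l \<in> {1..n + 1}" and \<mu>: "effect (d ^ n) (\<mu> n)"
  shows "accept_prob \<mu> T chi n l = complex_of_real (Re (accept_prob \<mu> T chi n l))"
    "0 \<le> Re (accept_prob \<mu> T chi n l)" "Re (accept_prob \<mu> T chi n l) \<le> 1"
  using effect_expectation_bounds[OF \<mu> test_state_carrier[OF l]] test_state_unit
    accept_prob_eq_test_state[OF l psdD(1)] \<mu>
  by (simp_all add: effect_def)

end

lemma cmod_prod_list_sq_ge:
  "(\<And>i. i \<in> set is \<Longrightarrow> c \<le> (cmod (z i))\<^sup>2) \<Longrightarrow> 0 \<le> c \<Longrightarrow>
    c ^ length is \<le> (cmod (\<Prod>i\<leftarrow>is. z i))\<^sup>2"
proof (induction "is")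
  case (Cons a "is")
  have "c * c ^ length is \<le> (cmod (z a))\<^sup>2 * (cmod (\<Prod>i\<leftarrow>is. z i))\<^sup>2"
    using Cons by (intro mult_mono) auto
  thus ?case by (simp add: norm_mult power_mult_distrib)
qed simp

text \<open>Per-round overlap at least c = (1 + cos a) / 2 gives overlap c ^ n for the n test rounds, and by
  Bernoulli's inequality 1 - c ^ n is at most n (1 - c).\<close>

lemma accept_prob_attacked_diff_le:
  assumes k: "k \<ge> 1" and l: "l \<in> {1..n + 1}"
    and T: "\<And>i. i \<in> {1..n + 1} \<Longrightarrow> unitary_mat (2 ^ k) (T n i)"
    and chi: "\<And>i. i \<in> {1..n + 1} \<Longrightarrow> unit_vector (2 ^ k) (chi n i)"
    and \<mu>: "effect ((2 ^ k) ^ n) (\<mu> n)"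
  shows "\<bar>Re (accept_prob \<mu> (\<lambda>n i. attacked k after a (T n i)) chi n l) - Re (accept_prob \<mu> T chi n l)\<bar>
    \<le> sqrt (real n * ((1 - cos a) / 2))"
proof -
  define TA where "TA = (\<lambda>n i. attacked k after a (T n i))"
  have TA: "unitary_mat (2 ^ k) (TA n i)" if "i \<in> {1..n + 1}" for i
    unfolding TA_def by (rule attacked_unitary[OF k T[OF that]])
  have \<mu>_carrier: "\<mu> n \<in> carrier_mat ((2 ^ k) ^ n) ((2 ^ k) ^ n)"
    using \<mu> by (auto simp: effect_def dest: psdD)
  have cos1: "0 \<le> 1 + cos a" using cos_ge_minus_one[of a] by linarith
  hence c0: "0 \<le> (1 + cos a) / 2" by simp
  let ?x = "test_state T chi n l" and ?y = "test_state TA chi n l"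
  have "accept_prob \<mu> T chi n l = cinner ?x (\<mu> n *\<^sub>v ?x)"
    "accept_prob \<mu> TA chi n l = cinner ?y (\<mu> n *\<^sub>v ?y)"
    using accept_prob_eq_test_state[where d = "2 ^ k" and n = n and T = T and chi = chi and \<mu> = \<mu>, OF T chi l \<mu>_carrier]
      accept_prob_eq_test_state[where d = "2 ^ k" and n = n and T = TA and chi = chi and \<mu> = \<mu>, OF TA chi l \<mu>_carrier]
    by simp_all
  hence "\<bar>Re (accept_prob \<mu> TA chi n l) - Re (accept_prob \<mu> T chi n l)\<bar> \<le> sqrt (1 - (cmod (cinner ?x ?y))\<^sup>2)"
    using effect_expectation_diff_le[OF \<mu>
        test_state_carrier[where d = "2 ^ k" and n = n and T = T and chi = chi, OF T chi l]
        test_state_carrier[where d = "2 ^ k" and n = n and T = TA and chi = chi, OF TA chi l]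
        test_state_unit[where d = "2 ^ k" and n = n and T = T and chi = chi, OF T chi]
        test_state_unit[where d = "2 ^ k" and n = n and T = TA and chi = chi, OF TA chi]]
    by simp
  moreover have "cinner ?x ?y = (\<Prod>i\<leftarrow>test_rounds n l. cinner (T n i *\<^sub>v chi n i) (TA n i *\<^sub>v chi n i))"
    unfolding test_state_def
    by (rule cinner_kron_vecs_map)
      (use unitary_matD(1)[OF T] unitary_matD(1)[OF TA] in \<open>fastforce simp: set_test_rounds\<close>)
  moreover have "((1 + cos a) / 2) ^ length (test_rounds n l) \<le>
      (cmod (\<Prod>i\<leftarrow>test_rounds n l. cinner (T n i *\<^sub>v chi n i) (TA n i *\<^sub>v chi n i)))\<^sup>2"
  proof (rule cmod_prod_list_sq_ge)
    fix i assume "i \<in> set (test_rounds n l)"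
    hence i: "i \<in> {1..n + 1}" by (simp add: set_test_rounds)
    show "(1 + cos a) / 2 \<le> (cmod (cinner (T n i *\<^sub>v chi n i) (TA n i *\<^sub>v chi n i)))\<^sup>2"
      unfolding TA_def using chi[OF i]
      by (intro cmod_cinner_attacked_ge[OF k T[OF i]]) (auto simp: unit_vector_def)
  qed (rule c0)
  moreover have "1 - ((1 + cos a) / 2) ^ n \<le> real n * ((1 - cos a) / 2)"
    using bernoulli_inequality[of "- ((1 - cos a) / 2)" n] cos1 by (simp add: field_simps)
  ultimately show ?thesis
    unfolding TA_def[symmetric] using length_test_rounds[OF l]
    by (smt (verit, best) real_sqrt_le_mono)
qed

section \<open>Trace distances of the output states\<close>

lemma cinner_vec_of_list_2: "cinner (vec_of_list [a, b]) (vec_of_list [c, d]) = cnj a * c + cnj b * d"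
  unfolding cinner_def by (simp add: numeral_2_eq_2 lessThan_Suc)

text \<open>For s = 1 and s = -1 these are the eigenvectors of the difference of the projections onto
  the plus state and its phase-shifted copy by 2 beta, i.e. the optimal measurement telling the two
  apart.\<close>

definition helstrom_vec :: "real \<Rightarrow> real \<Rightarrow> complex vec" where
  "helstrom_vec \<beta> s = vec_of_list [1 / sqrt 2, \<i> * s * cis \<beta> / sqrt 2]"

lemma dim_vec_qubits [simp]:
  "dim_vec ket_plus = 2" "dim_vec (ket_plus_alpha a) = 2" "dim_vec (helstrom_vec \<beta> s) = 2"
  unfolding ket_plus_def ket_plus_alpha_def helstrom_vec_def by auto

lemma ket_plus_eq: "ket_plus = vec_of_list [complex_of_real (1 / sqrt 2), complex_of_real (1 / sqrt 2)]"
  unfolding ket_plus_def by simp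

lemma ket_plus_alpha_eq: "ket_plus_alpha a = vec_of_list [complex_of_real (1 / sqrt 2), cis a / sqrt 2]"
  unfolding ket_plus_alpha_def by (simp add: cis_conv_exp)

lemma cinner_ket_plus: "cinner ket_plus ket_plus = 1"
  unfolding ket_plus_eq cinner_vec_of_list_2 by (simp flip: of_real_mult)

lemma cinner_helstrom_vec: "cinner (helstrom_vec \<beta> s) (helstrom_vec \<beta> t) = (1 + s * t) / 2"
proof -
  have "cinner (helstrom_vec \<beta> s) (helstrom_vec \<beta> t) = (1 + s * t * (cnj (cis \<beta>) * cis \<beta>)) / 2"
    unfolding helstrom_vec_def cinner_vec_of_list_2 by (simp add: field_simps flip: of_real_mult)
  thus ?thesis by (simp add: cis_cnj cis_mult)
qed

lemma unit_circle_shift_sq: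
  fixes x y c :: real
  assumes "x\<^sup>2 + y\<^sup>2 = 1"
  shows "((1 + c * x) / 2)\<^sup>2 + (c * y / 2)\<^sup>2 = (1 + c\<^sup>2 + 2 * c * x) / 4"
proof -
  have "(1 + c * x)\<^sup>2 + (c * y)\<^sup>2 = 1 + 2 * c * x + c\<^sup>2 * (x\<^sup>2 + y\<^sup>2)"
    by (simp add: power2_eq_square algebra_simps)
  thus ?thesis using assms by (simp add: power_divide add_divide_distrib[symmetric])
qed

lemma cmod_cinner_helstrom_vec_sq:
  "(cmod (cinner (helstrom_vec \<beta> s) ket_plus))\<^sup>2 = (1 + s\<^sup>2 - 2 * s * sin \<beta>) / 4"
  "(cmod (cinner (helstrom_vec \<beta> s) (ket_plus_alpha (2 * \<beta>))))\<^sup>2 = (1 + s\<^sup>2 + 2 * s * sin \<beta>) / 4"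
proof -
  have "cinner (helstrom_vec \<beta> s) ket_plus = Complex ((1 + (- s) * sin \<beta>) / 2) ((- s) * cos \<beta> / 2)"
    unfolding helstrom_vec_def ket_plus_eq cinner_vec_of_list_2
    by (simp add: complex_eq_iff field_simps flip: of_real_mult)
  thus "(cmod (cinner (helstrom_vec \<beta> s) ket_plus))\<^sup>2 = (1 + s\<^sup>2 - 2 * s * sin \<beta>) / 4"
    using unit_circle_shift_sq[of "sin \<beta>" "cos \<beta>" "- s"] by (simp add: cmod_power2)
  have c2: "cis (2 * \<beta>) = cis \<beta> * cis \<beta>" by (simp add: cis_mult flip: mult_2)
  have "cinner (helstrom_vec \<beta> s) (ket_plus_alpha (2 * \<beta>)) =
      (1 - \<i> * s * (cnj (cis \<beta>) * cis \<beta>) * cis \<beta>) / 2"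
    unfolding helstrom_vec_def ket_plus_alpha_eq cinner_vec_of_list_2 c2
    by (simp add: field_simps flip: of_real_mult)
  also have "\<dots> = Complex ((1 + s * sin \<beta>) / 2) ((- s) * cos \<beta> / 2)"
    by (simp add: cis_cnj cis_mult complex_eq_iff)
  finally show "(cmod (cinner (helstrom_vec \<beta> s) (ket_plus_alpha (2 * \<beta>))))\<^sup>2 = (1 + s\<^sup>2 + 2 * s * sin \<beta>) / 4"
    using unit_circle_shift_sq[of "sin \<beta>" "- cos \<beta>" s] by (simp add: cmod_power2)
qed

lemma dim_embed [simp]: "dim_vec (embed v) = dim_vec v + 1"
  unfolding embed_def by simp

lemma cinner_embed: "dim_vec u = dim_vec v \<Longrightarrow> cinner (embed u) (embed v) = cinner u v"
  unfolding cinner_def embed_def by (simp add: lessThan_Suc)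

lemma cinner_embed_unit_vec:
  "cinner (embed u) (unit_vec (dim_vec u + 1) (dim_vec u)) = 0"
  "cinner (unit_vec (dim_vec u + 1) (dim_vec u)) (embed u) = 0"
  unfolding cinner_def embed_def by (auto simp: lessThan_Suc unit_vec_def intro!: sum.neutral)

lemma dim_kron_vec_pow_plus [simp]: "dim_vec (kron_vec_pow ket_plus n) = 2 ^ n"
  by (induction n) auto

lemma cinner_kron_vec_pow_plus: "cinner (kron_vec_pow ket_plus n) (kron_vec_pow ket_plus n) = 1"
proof (induction n)
  case (Suc n)
  thus ?case by (simp only: kron_vec_pow.simps cinner_kron_vec[OF refl refl] cinner_ket_plus) simp
qed (simp add: cinner_def)

definition out_state :: "nat \<Rightarrow> complex vec \<Rightarrow> complex vec" where
  "out_state k x = embed (kron_vec (kron_vec_pow ket_plus (k - 1)) x)"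

lemma dim_out_state: "k \<ge> 1 \<Longrightarrow> dim_vec x = 2 \<Longrightarrow> dim_vec (out_state k x) = 2 ^ k + 1"
  unfolding out_state_def using two_pow_pred[of k] by simp

lemma out_state_carrier: "k \<ge> 1 \<Longrightarrow> dim_vec x = 2 \<Longrightarrow> out_state k x \<in> carrier_vec (2 ^ k + 1)"
  using dim_out_state by (rule carrier_vecI)

lemma cinner_out_state:
  "dim_vec x = 2 \<Longrightarrow> dim_vec y = 2 \<Longrightarrow> cinner (out_state k x) (out_state k y) = cinner x y"
  unfolding out_state_def by (simp add: cinner_embed cinner_kron_vec cinner_kron_vec_pow_plus)

lemma cinner_out_state_ket_bot:
  assumes "k \<ge> 1" "dim_vec x = 2"
  shows "cinner (out_state k x) (ket_bot k) = 0" "cinner (ket_bot k) (out_state k x) = 0"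
  using cinner_embed_unit_vec[of "kron_vec (kron_vec_pow ket_plus (k - 1)) x"] two_pow_pred[of k] assms
  by (simp_all add: out_state_def ket_bot_def)

lemma ket_bot_carrier: "ket_bot k \<in> carrier_vec (2 ^ k + 1)"
  unfolding ket_bot_def by simp

lemma cinner_ket_bot: "cinner (ket_bot k) (ket_bot k) = 1"
  unfolding ket_bot_def cinner_def by (simp add: unit_vec_def if_distrib[of "\<lambda>x. _ * x"] cong: if_cong)

lemma plus_k_eq_out_state: "k \<ge> 1 \<Longrightarrow> plus_k k = out_state k ket_plus"
  unfolding plus_k_def out_state_def by (metis Suc_diff_le diff_Suc_1 kron_vec_pow.simps(2))

lemma plus_k_alpha_eq_out_state: "plus_k_alpha k a = out_state k (ket_plus_alpha a)"
  unfolding plus_k_alpha_def out_state_def ..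

lemma proj_sum_diff_two_states:
  assumes "x1 \<in> carrier_vec n" "x2 \<in> carrier_vec n" "y1 \<in> carrier_vec n" "y2 \<in> carrier_vec n"
  shows "(complex_of_real a1 \<cdot>\<^sub>m proj x1 + complex_of_real a2 \<cdot>\<^sub>m proj x2)
      - (complex_of_real b1 \<cdot>\<^sub>m proj y1 + complex_of_real b2 \<cdot>\<^sub>m proj y2)
    = proj_sum n [(a1, x1), (a2, x2), (- b1, y1), (- b2, y2)]"
  using assms by (intro eq_matI) (auto simp: proj_def)

lemma trace_dist_rho_H_ge:
  assumes k: "k \<ge> 1" and h: "avg_accept \<Omega> \<mu> T chi = complex_of_real h"
  shows "\<bar>1 - h\<bar> \<le> trace_dist (rho_H k \<Omega> \<mu> T chi) (proj (plus_k k))"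
proof -
  let ?v = "plus_k k" and ?b = "ket_bot k" and ?N = "2 ^ k + 1"
  have v: "?v \<in> carrier_vec ?N" and b: "?b \<in> carrier_vec ?N"
    using out_state_carrier[OF k] ket_bot_carrier by (simp_all add: plus_k_eq_out_state[OF k])
  have vv: "cinner ?v ?v = 1" and bb: "cinner ?b ?b = 1" and vb: "cinner ?v ?b = 0" "cinner ?b ?v = 0"
    using cinner_out_state_ket_bot[OF k] cinner_ket_bot
    by (simp_all add: plus_k_eq_out_state[OF k] cinner_out_state cinner_ket_plus)
  define xs where "xs = [(h, ?v), (1 - h, ?b), (- 1, ?v), (- 0, ?b)]"
  have "rho_H k \<Omega> \<mu> T chi - proj ?v = proj_sum ?N xs"
  proof -
    have "proj ?v = complex_of_real 1 \<cdot>\<^sub>m proj ?v + complex_of_real 0 \<cdot>\<^sub>m proj ?b"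
      using v b by (intro eq_matI) (auto simp: proj_def)
    thus ?thesis
      unfolding xs_def using proj_sum_diff_two_states[OF v b v b, of h "1 - h" 1 0] h
      by (simp add: rho_H_def Let_def)
  qed
  moreover have "\<bar>\<Sum>(s, e)\<leftarrow>xs. \<Sum>(t, f)\<leftarrow>[(1, ?b), (- 1, ?v)]. s * t * (cmod (cinner f e))\<^sup>2\<bar>
      \<le> trace_norm (proj_sum ?N xs)"
    using v b vv bb vb by (intro trace_norm_proj_sum_ge) (auto simp: xs_def)
  moreover have "\<bar>2 - 2 * h\<bar> = 2 * \<bar>1 - h\<bar>" by (simp add: abs_if)
  ultimately have "2 * \<bar>1 - h\<bar> \<le> trace_norm (rho_H k \<Omega> \<mu> T chi - proj ?v)"
    using vv bb vb by (simp add: xs_def algebra_simps)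
  thus ?thesis by (simp add: trace_dist_def)
qed

lemma trace_dist_rho_D_ge:
  assumes k: "k \<ge> 1"
    and h: "avg_accept \<Omega> \<mu> (\<lambda>n i. attacked k after (2 * \<beta>) (T n i)) chi = complex_of_real h"
  shows "h * sin \<beta> \<le> trace_dist (rho_D k after (2 * \<beta>) \<Omega> \<mu> T chi)
      (complex_of_real p \<cdot>\<^sub>m proj (plus_k k) + complex_of_real (1 - p) \<cdot>\<^sub>m proj (ket_bot k))"
proof -
  define w where "w = plus_k_alpha k (2 * \<beta>)"
  let ?v = "plus_k k" and ?b = "ket_bot k" and ?N = "2 ^ k + 1"
  let ?e = "\<lambda>s. out_state k (helstrom_vec \<beta> s)"
  have carrier: "w \<in> carrier_vec ?N" "?v \<in> carrier_vec ?N" "?b \<in> carrier_vec ?N" "?e s \<in> carrier_vec ?N" for s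
    using out_state_carrier[OF k] ket_bot_carrier
    by (simp_all add: w_def plus_k_eq_out_state[OF k] plus_k_alpha_eq_out_state)
  have bot: "cinner (?e s) ?b = 0" "cinner ?b (?e s) = 0" "cinner ?b w = 0" "cinner ?b ?v = 0" for s
    using cinner_out_state_ket_bot[OF k]
    by (simp_all add: w_def plus_k_eq_out_state[OF k] plus_k_alpha_eq_out_state)
  have overlaps: "(cmod (cinner (?e s) w))\<^sup>2 = (1 + s\<^sup>2 + 2 * s * sin \<beta>) / 4"
    "(cmod (cinner (?e s) ?v))\<^sup>2 = (1 + s\<^sup>2 - 2 * s * sin \<beta>) / 4" for s
    by (simp_all add: w_def plus_k_eq_out_state[OF k] plus_k_alpha_eq_out_state cinner_out_state
        cmod_cinner_helstrom_vec_sq)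
  have on: "orthonormal ?N [?e 1, ?e (- 1), ?b]"
    using carrier bot cinner_ket_bot by (simp add: cinner_out_state cinner_helstrom_vec)
  define \<sigma> :: real where "\<sigma> = (if h \<le> p then 1 else - 1)"
  define xs where "xs = [(h, w), (1 - h, ?b), (- p, ?v), (- (1 - p), ?b)]"
  define ys where "ys = [(1, ?e 1), (- 1, ?e (- 1)), (\<sigma>, ?b)]"
  have "rho_D k after (2 * \<beta>) \<Omega> \<mu> T chi -
      (complex_of_real p \<cdot>\<^sub>m proj ?v + complex_of_real (1 - p) \<cdot>\<^sub>m proj ?b) = proj_sum ?N xs"
    unfolding xs_def using proj_sum_diff_two_states[OF carrier(1,3,2,3), of h "1 - h" p "1 - p"] h
    by (simp add: rho_D_def Let_def w_def)
  moreover have "\<bar>\<Sum>(s, e)\<leftarrow>xs. \<Sum>(t, f)\<leftarrow>ys. s * t * (cmod (cinner f e))\<^sup>2\<bar>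
      \<le> trace_norm (proj_sum ?N xs)"
    using carrier on by (intro trace_norm_proj_sum_ge) (auto simp: xs_def ys_def \<sigma>_def)
  moreover have "(\<Sum>(s, e)\<leftarrow>xs. \<Sum>(t, f)\<leftarrow>ys. s * t * (cmod (cinner f e))\<^sup>2) =
      (h + p) * sin \<beta> + \<sigma> * (p - h)"
    using bot cinner_ket_bot by (simp add: xs_def ys_def overlaps) (simp add: field_simps)
  moreover have "2 * (h * sin \<beta>) \<le> (h + p) * sin \<beta> + \<sigma> * (p - h)"
  proof (cases "h \<le> p")
    case True
    have "0 \<le> 1 + sin \<beta>" using sin_ge_minus_one[of \<beta>] by linarith
    hence "h * (1 + sin \<beta>) \<le> p * (1 + sin \<beta>)" by (rule mult_right_mono[OF True])
    thus ?thesis using True by (simp add: \<sigma>_def algebra_simps)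
  next
    case False
    have "0 \<le> 1 - sin \<beta>" using sin_le_one[of \<beta>] by linarith
    hence "p * (1 - sin \<beta>) \<le> h * (1 - sin \<beta>)" using False by (intro mult_right_mono) auto
    thus ?thesis using False by (simp add: \<sigma>_def algebra_simps)
  qed
  ultimately show ?thesis by (simp add: trace_dist_def)
qed

section \<open>Averaging over the number of test rounds\<close>

definition round_average :: "(nat \<Rightarrow> real) \<Rightarrow> (nat \<Rightarrow> nat \<Rightarrow> real) \<Rightarrow> real" where
  "round_average \<Omega> r = (\<Sum>n. \<Omega> n / real (n + 1) * (\<Sum>l = 1..n + 1. r n l))"

lemma round_average_term_bounds:
  assumes \<Omega>: "0 \<le> \<Omega> n" and r: "\<And>l. l \<in> {1..n + 1} \<Longrightarrow> 0 \<le> r n l \<and> r n l \<le> 1"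
  shows "0 \<le> \<Omega> n / real (n + 1) * (\<Sum>l = 1..n + 1. r n l)"
    "\<Omega> n / real (n + 1) * (\<Sum>l = 1..n + 1. r n l) \<le> \<Omega> n"
proof -
  have "0 \<le> (\<Sum>l = 1..n + 1. r n l)" using r by (intro sum_nonneg) auto
  thus "0 \<le> \<Omega> n / real (n + 1) * (\<Sum>l = 1..n + 1. r n l)"
    using \<Omega> by (intro mult_nonneg_nonneg divide_nonneg_nonneg) auto
  have "(\<Sum>l = 1..n + 1. r n l) \<le> (\<Sum>l = 1..n + 1. 1)" using r by (intro sum_mono) auto
  hence "(\<Sum>l = 1..n + 1. r n l) / real (n + 1) \<le> 1" by (simp add: divide_le_eq)
  hence "\<Omega> n * ((\<Sum>l = 1..n + 1. r n l) / real (n + 1)) \<le> \<Omega> n * 1"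
    using \<Omega> by (intro mult_left_mono) auto
  thus "\<Omega> n / real (n + 1) * (\<Sum>l = 1..n + 1. r n l) \<le> \<Omega> n" by (simp add: field_simps)
qed

lemma round_average_bounds:
  assumes \<Omega>: "\<And>n. 0 \<le> \<Omega> n" "\<Omega> sums 1"
    and r: "\<And>n l. l \<in> {1..n + 1} \<Longrightarrow> 0 \<le> r n l \<and> r n l \<le> 1"
  shows "summable (\<lambda>n. \<Omega> n / real (n + 1) * (\<Sum>l = 1..n + 1. r n l))"
    "0 \<le> round_average \<Omega> r" "round_average \<Omega> r \<le> 1"
proof -
  have term_bounds: "0 \<le> \<Omega> n / real (n + 1) * (\<Sum>l = 1..n + 1. r n l)"
    "\<Omega> n / real (n + 1) * (\<Sum>l = 1..n + 1. r n l) \<le> \<Omega> n" for n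
    using round_average_term_bounds[of \<Omega> n r, OF \<Omega>(1) r] by auto
  have \<Omega>_summable: "summable \<Omega>" and \<Omega>1: "suminf \<Omega> = 1" using \<Omega>(2) by (auto simp: sums_iff)
  show summable: "summable (\<lambda>n. \<Omega> n / real (n + 1) * (\<Sum>l = 1..n + 1. r n l))"
    by (rule summable_comparison_test'[OF \<Omega>_summable, of 0])
      (metis real_norm_def abs_of_nonneg term_bounds)
  show "0 \<le> round_average \<Omega> r"
    unfolding round_average_def using summable term_bounds(1) by (simp add: suminf_nonneg)
  show "round_average \<Omega> r \<le> 1"
    unfolding round_average_def using suminf_le[OF term_bounds(2) summable \<Omega>_summable] \<Omega>1 by simp
qed

lemma avg_accept_eq_round_average:
  assumes \<Omega>: "\<And>n. 0 \<le> \<Omega> n" "\<Omega> sums 1"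
    and accept: "\<And>n l. l \<in> {1..n + 1} \<Longrightarrow>
      accept_prob \<mu> T chi n l = complex_of_real (r n l) \<and> 0 \<le> r n l \<and> r n l \<le> 1"
  shows "avg_accept \<Omega> \<mu> T chi = complex_of_real (round_average \<Omega> r)"
proof -
  have "avg_accept \<Omega> \<mu> T chi = (\<Sum>n. complex_of_real (\<Omega> n / real (n + 1) * (\<Sum>l = 1..n + 1. r n l)))"
    unfolding avg_accept_def using accept by (intro arg_cong[where f = suminf] ext) simp
  also have "\<dots> = complex_of_real (round_average \<Omega> r)"
    unfolding round_average_def using round_average_bounds(1)[OF \<Omega>] accept
    by (intro suminf_of_real[symmetric]) blast
  finally show ?thesis .
qed

lemma suminf_mult_sqrt_le:
  assumes \<Omega>: "\<And>n. 0 \<le> \<Omega> n" "\<Omega> sums 1" and mean: "summable (\<lambda>n. real n * \<Omega> n)"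
  shows "summable (\<lambda>n. \<Omega> n * sqrt (real n))" "(\<Sum>n. \<Omega> n * sqrt (real n)) \<le> sqrt (\<Sum>n. real n * \<Omega> n)"
proof -
  define N where "N = (\<Sum>n. real n * \<Omega> n)"
  have N_nonneg: "N \<ge> 0" unfolding N_def using mean \<Omega>(1) by (simp add: suminf_nonneg)
  have bound: "\<Omega> n * sqrt (real n) \<le> real n * \<Omega> n + \<Omega> n" for n
  proof -
    have "sqrt (real n) \<le> real n + 1" by (rule real_le_lsqrt) (auto simp: power2_eq_square algebra_simps)
    hence "\<Omega> n * sqrt (real n) \<le> \<Omega> n * (real n + 1)" by (rule mult_left_mono[OF _ \<Omega>(1)])
    also have "\<dots> = real n * \<Omega> n + \<Omega> n" by (simp add: algebra_simps)
    finally show ?thesis .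
  qed
  have "norm (\<Omega> n * sqrt (real n)) = \<Omega> n * sqrt (real n)" for n
    using \<Omega>(1)[of n] by simp
  thus summable: "summable (\<lambda>n. \<Omega> n * sqrt (real n))"
    using bound by (intro summable_comparison_test'[OF summable_add[OF mean sums_summable[OF \<Omega>(2)]]]) simp
  show "(\<Sum>n. \<Omega> n * sqrt (real n)) \<le> sqrt N"
  proof (cases "N = 0")
    case True
    have zero: "real n * \<Omega> n = 0" for n
      using suminf_eq_zero_iff[OF mean] \<Omega>(1) True by (simp add: N_def)
    have "(\<lambda>n. \<Omega> n * sqrt (real n)) = (\<lambda>_. 0)"
    proof
      fix n show "\<Omega> n * sqrt (real n) = 0" using zero[of n] by (cases "n = 0") auto
    qed
    thus ?thesis using N_nonneg by simp
  next
    case False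
    hence N_pos: "N > 0" using N_nonneg by simp
    have am_gm: "\<Omega> n * sqrt (real n) \<le> (real n * \<Omega> n + N * \<Omega> n) / (2 * sqrt N)" for n
    proof -
      have "0 \<le> (sqrt (real n) - sqrt N)\<^sup>2" by simp
      hence "sqrt (real n) \<le> (real n + N) / (2 * sqrt N)"
        using N_pos by (simp add: power2_eq_square field_simps)
      hence "\<Omega> n * sqrt (real n) \<le> \<Omega> n * ((real n + N) / (2 * sqrt N))"
        by (rule mult_left_mono[OF _ \<Omega>(1)])
      also have "\<dots> = (real n * \<Omega> n + N * \<Omega> n) / (2 * sqrt N)" by (simp add: algebra_simps)
      finally show ?thesis .
    qed
    have "(\<lambda>n. real n * \<Omega> n + N * \<Omega> n) sums (N + N * 1)"
      using sums_add[OF summable_sums[OF mean] sums_mult[OF \<Omega>(2), of N]] by (simp add: N_def)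
    hence "(\<lambda>n. (real n * \<Omega> n + N * \<Omega> n) / (2 * sqrt N)) sums ((N + N * 1) / (2 * sqrt N))"
      by (rule sums_divide)
    hence "(\<Sum>n. \<Omega> n * sqrt (real n)) \<le> (N + N * 1) / (2 * sqrt N)"
      by (rule sums_le[OF am_gm summable_sums[OF summable]])
    also have "\<dots> = sqrt N" using N_pos by (simp add: field_simps flip: real_sqrt_mult)
    finally show ?thesis .
  qed
qed

lemma round_average_diff_le:
  assumes \<Omega>: "\<And>n. 0 \<le> \<Omega> n" "\<Omega> sums 1" and mean: "summable (\<lambda>n. real n * \<Omega> n)"
    and r: "\<And>n l. l \<in> {1..n + 1} \<Longrightarrow> 0 \<le> r n l \<and> r n l \<le> 1"
    and r': "\<And>n l. l \<in> {1..n + 1} \<Longrightarrow> 0 \<le> r' n l \<and> r' n l \<le> 1"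
    and c: "0 \<le> c" and diff: "\<And>n l. l \<in> {1..n + 1} \<Longrightarrow> r n l - r' n l \<le> c * sqrt (real n)"
  shows "round_average \<Omega> r - round_average \<Omega> r' \<le> c * sqrt (\<Sum>n. real n * \<Omega> n)"
proof -
  let ?g = "\<lambda>r n. \<Omega> n / real (n + 1) * (\<Sum>l = 1..n + 1. r n l)"
  note sqrt_mean = suminf_mult_sqrt_le[OF \<Omega> mean]
  have term_diff: "?g r n - ?g r' n \<le> c * (\<Omega> n * sqrt (real n))" for n
  proof -
    have "?g r n - ?g r' n = \<Omega> n / real (n + 1) * (\<Sum>l = 1..n + 1. r n l - r' n l)"
      by (simp add: sum_subtractf right_diff_distrib)
    also have "\<dots> \<le> \<Omega> n / real (n + 1) * (\<Sum>l = 1..n + 1. c * sqrt (real n))"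
      using diff \<Omega>(1)[of n] by (intro mult_left_mono sum_mono) auto
    also have "\<dots> = c * (\<Omega> n * sqrt (real n))" by simp
    finally show ?thesis .
  qed
  have "round_average \<Omega> r - round_average \<Omega> r' = (\<Sum>n. ?g r n - ?g r' n)"
    unfolding round_average_def
    by (rule suminf_diff[OF round_average_bounds(1)[OF \<Omega> r] round_average_bounds(1)[OF \<Omega> r']])
  also have "\<dots> \<le> (\<Sum>n. c * (\<Omega> n * sqrt (real n)))"
    using term_diff round_average_bounds(1)[OF \<Omega> r] round_average_bounds(1)[OF \<Omega> r'] sqrt_mean(1)
    by (intro suminf_le summable_diff summable_mult) auto
  also have "\<dots> = c * (\<Sum>n. \<Omega> n * sqrt (real n))" by (rule suminf_mult[OF sqrt_mean(1)])
  also have "\<dots> \<le> c * sqrt (\<Sum>n. real n * \<Omega> n)" by (rule mult_left_mono[OF sqrt_mean(2) c])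
  finally show ?thesis .
qed

lemma avg_accept_eq_round_average_Re:
  assumes \<Omega>: "\<And>n. 0 \<le> \<Omega> n" "\<Omega> sums 1"
    and T: "\<And>n i. i \<in> {1..n + 1} \<Longrightarrow> unitary_mat d (T n i)"
    and chi: "\<And>n i. i \<in> {1..n + 1} \<Longrightarrow> unit_vector d (chi n i)"
    and \<mu>: "\<And>n. effect (d ^ n) (\<mu> n)"
  defines "p \<equiv> round_average \<Omega> (\<lambda>n l. Re (accept_prob \<mu> T chi n l))"
  shows "avg_accept \<Omega> \<mu> T chi = complex_of_real p" "0 \<le> p" "p \<le> 1"
proof -
  have accept: "accept_prob \<mu> T chi n l = complex_of_real (Re (accept_prob \<mu> T chi n l)) \<and>
      0 \<le> Re (accept_prob \<mu> T chi n l) \<and> Re (accept_prob \<mu> T chi n l) \<le> 1" if "l \<in> {1..n + 1}" for n l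
    using accept_prob_bounds[where d = d and n = n and T = T and chi = chi and \<mu> = \<mu>, OF T chi that \<mu>]
    by blast
  show "avg_accept \<Omega> \<mu> T chi = complex_of_real p"
    unfolding p_def by (rule avg_accept_eq_round_average[OF \<Omega> accept])
  have bounds: "0 \<le> Re (accept_prob \<mu> T chi n l) \<and> Re (accept_prob \<mu> T chi n l) \<le> 1"
    if "l \<in> {1..n + 1}" for n l using accept[OF that] by blast
  show "0 \<le> p" "p \<le> 1"
    unfolding p_def
    using round_average_bounds(2,3)[where r = "\<lambda>n l. Re (accept_prob \<mu> T chi n l)", OF \<Omega> bounds]
    by simp_all
qed

lemma round_average_attacked_diff_le:
  assumes k: "k \<ge> 1" and \<Omega>: "\<And>n. 0 \<le> \<Omega> n" "\<Omega> sums 1" and mean: "summable (\<lambda>n. real n * \<Omega> n)"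
    and T: "\<And>n i. i \<in> {1..n + 1} \<Longrightarrow> unitary_mat (2 ^ k) (T n i)"
    and chi: "\<And>n i. i \<in> {1..n + 1} \<Longrightarrow> unit_vector (2 ^ k) (chi n i)"
    and \<mu>: "\<And>n. effect ((2 ^ k) ^ n) (\<mu> n)"
  shows "round_average \<Omega> (\<lambda>n l. Re (accept_prob \<mu> T chi n l))
      - round_average \<Omega> (\<lambda>n l. Re (accept_prob \<mu> (\<lambda>n i. attacked k after (2 * \<beta>) (T n i)) chi n l))
    \<le> \<bar>sin \<beta>\<bar> * sqrt (\<Sum>n. real n * \<Omega> n)"
proof (rule round_average_diff_le[OF \<Omega> mean])
  have TA: "unitary_mat (2 ^ k) (attacked k after (2 * \<beta>) (T n i))" if "i \<in> {1..n + 1}" for n i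
    by (rule attacked_unitary[OF k T[OF that]])
  show "0 \<le> Re (accept_prob \<mu> T chi n l) \<and> Re (accept_prob \<mu> T chi n l) \<le> 1"
    "0 \<le> Re (accept_prob \<mu> (\<lambda>n i. attacked k after (2 * \<beta>) (T n i)) chi n l) \<and>
      Re (accept_prob \<mu> (\<lambda>n i. attacked k after (2 * \<beta>) (T n i)) chi n l) \<le> 1"
    if "l \<in> {1..n + 1}" for n l
    using accept_prob_bounds[where d = "2 ^ k" and n = n and T = T and chi = chi and \<mu> = \<mu>, OF T chi that \<mu>]
      accept_prob_bounds[where d = "2 ^ k" and n = n and T = "\<lambda>n i. attacked k after (2 * \<beta>) (T n i)"
        and chi = chi and \<mu> = \<mu>, OF TA chi that \<mu>]
    by auto
  show "Re (accept_prob \<mu> T chi n l) - Re (accept_prob \<mu> (\<lambda>n i. attacked k after (2 * \<beta>) (T n i)) chi n l)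
      \<le> \<bar>sin \<beta>\<bar> * sqrt (real n)" if "l \<in> {1..n + 1}" for n l
  proof -
    have "(1 - cos (2 * \<beta>)) / 2 = (sin \<beta>)\<^sup>2" by (simp add: cos_double_sin)
    thus ?thesis
      using accept_prob_attacked_diff_le[where T = T and chi = chi and \<mu> = \<mu> and n = n and after = after
          and a = "2 * \<beta>", OF k that T chi \<mu>]
      by (simp add: real_sqrt_mult mult.commute)
  qed
qed simp

lemma security_tradeoff_arith:
  fixes pH pD S M eH eD :: real
  assumes "pH \<le> 1" "0 \<le> S" "S \<le> 1" "pH - pD \<le> M" "\<bar>1 - pH\<bar> \<le> eH" "pD * S \<le> eD"
  shows "S - M * S \<le> eH + eD"
proof -
  have "(pH - M) * S \<le> pD * S" using assms(2,4) by (intro mult_right_mono) auto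
  moreover have "0 \<le> (1 - pH) * (1 - S)" using assms(1,3) by simp
  ultimately show ?thesis using assms(5,6) by (simp add: algebra_simps abs_if split: if_splits)
qed

theorem theorem2:
  fixes k :: nat and \<Omega> :: "nat \<Rightarrow> real"
    and T :: "nat \<Rightarrow> nat \<Rightarrow> complex mat" and chi :: "nat \<Rightarrow> nat \<Rightarrow> complex vec"
    and \<mu> :: "nat \<Rightarrow> complex mat"
    and attack_after :: bool and \<epsilon>H \<epsilon>D :: real
  assumes k: "k \<ge> 1"
    and \<Omega>_nonneg: "\<And>n. \<Omega> n \<ge> 0"
    and \<Omega>_prob: "\<Omega> sums 1"
    and finite_mean: "summable (\<lambda>n. real n * \<Omega> n)"
    and N_ge_1: "(\<Sum>n. real n * \<Omega> n) \<ge> 1"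
    and T_unitary: "\<And>n i. i \<in> {1..n + 1} \<Longrightarrow> unitary_mat (2 ^ k) (T n i)"
    and chi_unit: "\<And>n i. i \<in> {1..n + 1} \<Longrightarrow> unit_vector (2 ^ k) (chi n i)"
    and \<mu>_effect: "\<And>n. effect ((2 ^ k) ^ n) (\<mu> n)"
    and \<epsilon>H_nonneg: "\<epsilon>H \<ge> 0" and \<epsilon>D_nonneg: "\<epsilon>D \<ge> 0"
    and correct: "trace_dist (rho_H k \<Omega> \<mu> T chi) (proj (plus_k k)) \<le> \<epsilon>H"
    and secure: "\<And>a::real. \<exists>p\<in>{0..1::real}.
        trace_dist (rho_D k attack_after a \<Omega> \<mu> T chi)
          (complex_of_real p \<cdot>\<^sub>m proj (plus_k k) + complex_of_real (1 - p) \<cdot>\<^sub>m proj (ket_bot k))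
        \<le> \<epsilon>D"
  shows "\<epsilon>H + \<epsilon>D \<ge> 1 / (4 * sqrt (\<Sum>n. real n * \<Omega> n))"
proof -
  define N where "N = (\<Sum>n. real n * \<Omega> n)"
  define S where "S = 1 / (2 * sqrt N)"
  have "1 \<le> N" "1 \<le> sqrt N" using N_ge_1 by (simp_all add: N_def)
  hence S: "0 < S" "S \<le> 1" "S - S * sqrt N * S = 1 / (4 * sqrt N)"
    by (auto simp: S_def field_simps simp del: real_sqrt_ge_1_iff)
  define \<beta> where "\<beta> = arcsin S"
  have sin_\<beta>: "sin \<beta> = S" using S by (simp add: \<beta>_def)
  define pH where "pH = round_average \<Omega> (\<lambda>n l. Re (accept_prob \<mu> T chi n l))"
  define pD where
    "pD = round_average \<Omega> (\<lambda>n l. Re (accept_prob \<mu> (\<lambda>n i. attacked k attack_after (2 * \<beta>) (T n i)) chi n l))"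
  note honest = avg_accept_eq_round_average_Re[where T = T and chi = chi and \<mu> = \<mu>,
      OF \<Omega>_nonneg \<Omega>_prob T_unitary chi_unit \<mu>_effect, folded pH_def]
  note attacked = avg_accept_eq_round_average_Re[where T = "\<lambda>n i. attacked k attack_after (2 * \<beta>) (T n i)"
      and chi = chi and \<mu> = \<mu>, OF \<Omega>_nonneg \<Omega>_prob attacked_unitary[OF k T_unitary] chi_unit \<mu>_effect,
      folded pD_def]
  obtain p where "trace_dist (rho_D k attack_after (2 * \<beta>) \<Omega> \<mu> T chi)
      (complex_of_real p \<cdot>\<^sub>m proj (plus_k k) + complex_of_real (1 - p) \<cdot>\<^sub>m proj (ket_bot k)) \<le> \<epsilon>D"
    using secure by blast
  hence "pD * S \<le> \<epsilon>D" using trace_dist_rho_D_ge[where p = p, OF k attacked(1)] sin_\<beta> by simp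
  moreover have "\<bar>1 - pH\<bar> \<le> \<epsilon>H" using trace_dist_rho_H_ge[OF k honest(1)] correct by simp
  moreover have "pH - pD \<le> S * sqrt N"
    using round_average_attacked_diff_le[where T = T and chi = chi and \<mu> = \<mu> and after = attack_after
        and \<beta> = \<beta>, OF k \<Omega>_nonneg \<Omega>_prob finite_mean T_unitary chi_unit \<mu>_effect]
      S(1) by (simp add: pH_def pD_def N_def sin_\<beta>)
  ultimately have "S - S * sqrt N * S \<le> \<epsilon>H + \<epsilon>D"
    using security_tradeoff_arith[OF honest(3) less_imp_le[OF S(1)] S(2)] by blast
  thus ?thesis using S(3) by (simp add: N_def)
qed

end
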